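(* For every $N\geqslant 2$ there exists a piecewise affine contracting interval map $f$ (affine on each contraction piece) which has $N$ contraction pieces and satisfies the separation property, whose attractor $\Lambda$ is a minimal Cantor set, and such that every discontinuity of $f$ is left-right recurrently visited by every orbit, i.e. $\Delta_{lr}(x)=\Delta$ for all $x\in X$.
   Context: Let $X$ be a compact interval of $\mathbb{R}$ and $X_1<\dots<X_N$ ($N\geqslant 2$) non-empty pairwise disjoint intervals, open in $X$, with $X=\bigcup_i\overline{X_i}$; $\Delta:=\{x\in\overline{X_i}\cap\overline{X_j}:i\neq j\}=\{c_1,\dots,c_{N-1}\}$, $\{c_i\}=\overline{X_i}\cap\overline{X_{i+1}}$. A piecewise contracting interval map is $f:X\to X$, discontinuous at every point of $\Delta$, with some $\lambda\in(0,1)$ such that $|f(x)-f(y)|\leqslant\lambda|x-y|$ for $x,y$ in the same $X_i$; $f_i$ denotes the continuous extension of $f|_{X_i}$ to $\overline{X_i}$. Separation property: each $f_i$ injective and $f_i(\overline{X_i})\cap f_j(\overline{X_j})=\emptyset$ for $i\neq j$. Atoms: $F_i(A):=\overline{f(A\cap X_i)}$, $A_{i_1\dots i_n}:=F_{i_n}\circ\dots\circ F_{i_1}(X)$ is an atom of generation $n$ if non-empty; $\mathcal{A}_n$ is the set of atoms of generation $n$; $\mathcal{A}_n(x):=\{A\in\mathcal{A}_n:\exists t\in\mathbb{N},\ f^{t+n}(x)\in A\}$. The attractor is $\Lambda:=\bigcap_{n\geqslant1}\bigcup_{A\in\mathcal{A}_n}A$. $c_i$ is $n$-left-right visited by the orbit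 of $x$ if there is $A\in\mathcal{A}_n(x)$ with $c_i\in A$, $f^{t+n}(x)\in A\cap X_i$ and $f^{t'+n}(x)\in A\cap X_{i+1}$ for some $t,t'\in\mathbb{N}$; $\Delta^n_{lr}(x)$ is the set of such discontinuities and $\Delta_{lr}(x):=\bigcap_{n\geqslant 1}\Delta^n_{lr}(x)$. $\Lambda$ minimal means $f(\Lambda)\subset\Lambda$ and the forward orbit of every point of $\Lambda$ is dense in $\Lambda$. *)

theory Defs
  imports "HOL-Analysis.Analysis"
begin

definition pieces_partition :: "nat \<Rightarrow> real \<Rightarrow> real \<Rightarrow> (nat \<Rightarrow> real set) \<Rightarrow> bool" where
  "pieces_partition N a b P \<longleftrightarrow>
     a < b \<and> N \<ge> 2 \<and>
     (\<forall>i\<in>{1..N}. P i \<noteq> {} \<and> is_interval (P i) \<and> openin (top_of_set {a..b}) (P i)) \<and>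
     (\<forall>i\<in>{1..N}. \<forall>j\<in>{1..N}. i < j \<longrightarrow> (\<forall>x\<in>P i. \<forall>y\<in>P j. x < y)) \<and>
     (\<forall>i\<in>{1..N}. \<forall>j\<in>{1..N}. i \<noteq> j \<longrightarrow> P i \<inter> P j = {}) \<and>
     (\<Union>i\<in>{1..N}. closure (P i)) = {a..b}"

definition Delta :: "nat \<Rightarrow> (nat \<Rightarrow> real set) \<Rightarrow> real set" where
  "Delta N P = {x. \<exists>i\<in>{1..N}. \<exists>j\<in>{1..N}. i \<noteq> j \<and> x \<in> closure (P i) \<inter> closure (P j)}"

definition piecewise_contracting :: "nat \<Rightarrow> real \<Rightarrow> real \<Rightarrow> (nat \<Rightarrow> real set) \<Rightarrow> (real \<Rightarrow> real) \<Rightarrow> bool" where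
  "piecewise_contracting N a b P f \<longleftrightarrow>
     pieces_partition N a b P \<and>
     f ` {a..b} \<subseteq> {a..b} \<and>
     (\<forall>c\<in>Delta N P. \<not> continuous (at c within {a..b}) f) \<and>
     (\<exists>lam::real. 0 < lam \<and> lam < 1 \<and>
        (\<forall>i\<in>{1..N}. \<forall>x\<in>P i. \<forall>y\<in>P i. \<bar>f x - f y\<bar> \<le> lam * \<bar>x - y\<bar>))"

definition piecewise_affine :: "nat \<Rightarrow> (nat \<Rightarrow> real set) \<Rightarrow> (real \<Rightarrow> real) \<Rightarrow> bool" where
  "piecewise_affine N P f \<longleftrightarrow>
     (\<forall>i\<in>{1..N}. \<exists>\<alpha> \<beta>::real. \<forall>x\<in>P i. f x = \<alpha> * x + \<beta>)"

text \<open>Separation property, with f_i the continuous extension of f restricted to P i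
  to the closure of P i (unique when it exists).\<close>
definition separation :: "nat \<Rightarrow> (nat \<Rightarrow> real set) \<Rightarrow> (real \<Rightarrow> real) \<Rightarrow> bool" where
  "separation N P f \<longleftrightarrow>
     (\<exists>g :: nat \<Rightarrow> real \<Rightarrow> real.
        (\<forall>i\<in>{1..N}. continuous_on (closure (P i)) (g i) \<and> (\<forall>x\<in>P i. g i x = f x)
                     \<and> inj_on (g i) (closure (P i))) \<and>
        (\<forall>i\<in>{1..N}. \<forall>j\<in>{1..N}. i \<noteq> j \<longrightarrow> g i ` closure (P i) \<inter> g j ` closure (P j) = {}))"

definition Fmap :: "(nat \<Rightarrow> real set) \<Rightarrow> (real \<Rightarrow> real) \<Rightarrow> nat \<Rightarrow> real set \<Rightarrow> real set" where
  "Fmap P f i A = closure (f ` (A \<inter> P i))"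

text \<open>A_{i_1...i_n} = F_{i_n} o ... o F_{i_1} (X) for the word [i_1,...,i_n].\<close>
definition atom_of :: "real \<Rightarrow> real \<Rightarrow> (nat \<Rightarrow> real set) \<Rightarrow> (real \<Rightarrow> real) \<Rightarrow> nat list \<Rightarrow> real set" where
  "atom_of a b P f w = fold (Fmap P f) w {a..b}"

definition atoms :: "nat \<Rightarrow> real \<Rightarrow> real \<Rightarrow> (nat \<Rightarrow> real set) \<Rightarrow> (real \<Rightarrow> real) \<Rightarrow> nat \<Rightarrow> real set set" where
  "atoms N a b P f n = {atom_of a b P f w | w. length w = n \<and> set w \<subseteq> {1..N} \<and> atom_of a b P f w \<noteq> {}}"

definition attractor :: "nat \<Rightarrow> real \<Rightarrow> real \<Rightarrow> (nat \<Rightarrow> real set) \<Rightarrow> (real \<Rightarrow> real) \<Rightarrow> real set" where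
  "attractor N a b P f = (\<Inter>n\<in>{1..}. \<Union>(atoms N a b P f n))"

definition atoms_visited :: "nat \<Rightarrow> real \<Rightarrow> real \<Rightarrow> (nat \<Rightarrow> real set) \<Rightarrow> (real \<Rightarrow> real) \<Rightarrow> nat \<Rightarrow> real \<Rightarrow> real set set" where
  "atoms_visited N a b P f n x = {A \<in> atoms N a b P f n. \<exists>t. (f ^^ (t + n)) x \<in> A}"

definition Delta_lr_n :: "nat \<Rightarrow> real \<Rightarrow> real \<Rightarrow> (nat \<Rightarrow> real set) \<Rightarrow> (real \<Rightarrow> real) \<Rightarrow> nat \<Rightarrow> real \<Rightarrow> real set" where
  "Delta_lr_n N a b P f n x = {c. \<exists>i\<in>{1..<N}. c \<in> closure (P i) \<inter> closure (P (Suc i)) \<and>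
      (\<exists>A\<in>atoms_visited N a b P f n x. c \<in> A \<and>
         (\<exists>t. (f ^^ (t + n)) x \<in> A \<inter> P i) \<and>
         (\<exists>t'. (f ^^ (t' + n)) x \<in> A \<inter> P (Suc i)))}"

definition Delta_lr :: "nat \<Rightarrow> real \<Rightarrow> real \<Rightarrow> (nat \<Rightarrow> real set) \<Rightarrow> (real \<Rightarrow> real) \<Rightarrow> real \<Rightarrow> real set" where
  "Delta_lr N a b P f x = (\<Inter>n\<in>{1..}. Delta_lr_n N a b P f n x)"

definition minimal_set :: "(real \<Rightarrow> real) \<Rightarrow> real set \<Rightarrow> bool" where
  "minimal_set f L \<longleftrightarrow> f ` L \<subseteq> L \<and> (\<forall>y\<in>L. L \<subseteq> closure {(f ^^ n) y | n. True})"

definition cantor_set :: "real set \<Rightarrow> bool" where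
  "cantor_set S \<longleftrightarrow> S \<noteq> {} \<and> compact S \<and> (\<forall>x\<in>S. x islimpt S) \<and>
     (\<forall>x\<in>S. connected_component_set S x = {x})"

end

theory Submission
  imports Defs
begin

text \<open>
  Fix an irrational rotation number \<theta> in (0, 1/2) and points 0 = y 0 < ... < y (K-1) < 1 - \<theta>
  whose differences are rationally independent of \<theta> and 1, where K = N - 1. The rotation
  R s = frac (s + \<theta>) is a translation on each of the N intervals into which the points y j
  and 1 - \<theta> cut [0, 1]. Blow up each orbit point R^(n+1) (y j) into an interval of length
  2^-(n+1): with \<mu> the atomic measure carrying these weights (total mass K), a point s becomes the
  interval [\<mu> [0, s), \<mu> [0, s]] of [0, K]. The rotation maps the blown-up point R^(n+1) (y j) to
  R^(n+2) (y j), whose interval is half as long, so R lifts to a map f that is affine of slope 1/2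
  on each of the N pieces and, at each interior cut y j, jumps over the interval of R (y j).

  The attractor is the set of endpoints of the blown-up intervals: a Cantor set on which f is
  semi-conjugate to R, hence minimal by Kronecker's theorem. Every atom is an interval whose
  endpoints lie over forward orbits of the cuts, and these never return to a cut; so an atom
  containing a discontinuity contains it in its interior, and every orbit, following a dense
  R-orbit, enters that atom on both sides of the discontinuity.
\<close>

lemma frac_eq_iff_diff_Ints: "frac a = frac b \<longleftrightarrow> a - b \<in> \<int>"
proof -
  have "frac a = frac b \<longleftrightarrow> a - frac b \<in> \<int>"
    using frac_unique_iff[of a "frac b"] frac_lt_1[of b] by auto
  also have "a - frac b = (a - b) + of_int \<lfloor>b\<rfloor>" by (simp add: frac_def)
  also have "\<dots> \<in> \<int> \<longleftrightarrow> a - b \<in> \<int>"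
    by (metis Ints_add Ints_diff Ints_of_int add_diff_cancel_right')
  finally show ?thesis .
qed

lemma Ints_diff_unit_interval:
  fixes a b :: real
  assumes "a - b \<in> \<int>" "0 \<le> a" "a \<le> 1" "0 \<le> b" "b < 1"
  shows "a = b \<or> a = b + 1"
proof -
  obtain n where n: "a - b = of_int n" using assms(1) by (auto elim: Ints_cases)
  then have "-1 < n" "n \<le> 1" using assms by linarith+
  then have "n = 0 \<or> n = 1" by linarith
  then show ?thesis using n by auto
qed

lemma frac_range: "0 \<le> frac a" "frac a \<le> 1"
  using frac_lt_1[of a] by auto

lemma irrational_rotation_hits_interval:
  assumes irr: "\<theta> \<notin> \<rat>" and ab: "0 \<le> a" "a < b" "b \<le> 1"
  shows "\<exists>t\<ge>t0. frac (s + real t * \<theta>) \<in> {a<..<b}"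
proof -
  define mid where "mid = (a + b) / 2"
  define \<epsilon> where "\<epsilon> = (b - a) / 2"
  have \<epsilon>: "\<epsilon> > 0" using ab unfolding \<epsilon>_def by simp
  define \<alpha> where "\<alpha> = frac (mid - s)"
  define \<theta>' where "\<theta>' = real (Suc t0) * \<theta>"
  have irr': "\<theta>' \<notin> \<rat>"
  proof
    assume "\<theta>' \<in> \<rat>"
    then have "\<theta>' / real (Suc t0) \<in> \<rat>" by simp
    then show False using irr unfolding \<theta>'_def by simp
  qed
  have \<alpha>: "0 \<le> \<alpha>" "\<alpha> \<le> 1" unfolding \<alpha>_def using frac_range .
  obtain k where k: "k > 0" "\<bar>frac (real k * \<theta>') - \<alpha>\<bar> < \<epsilon>"
    using Kronecker_approx_1_explicit[OF irr' \<alpha> \<epsilon>] by blast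
  define e where "e = frac (real k * \<theta>') - \<alpha>"
  define t where "t = k * Suc t0"
  have "t \<ge> t0" unfolding t_def using k(1) by (simp add: trans_le_add2)
  have "s + real t * \<theta> - (mid + e) = (real k * \<theta>' - frac (real k * \<theta>')) - ((mid - s) - frac (mid - s))"
    unfolding t_def \<theta>'_def e_def \<alpha>_def by (simp add: algebra_simps)
  also have "\<dots> = of_int (\<lfloor>real k * \<theta>'\<rfloor> - \<lfloor>mid - s\<rfloor>)" by (simp add: frac_def)
  finally have "s + real t * \<theta> - (mid + e) \<in> \<int>" by (metis Ints_of_int)
  moreover have "a < mid + e" "mid + e < b"
    using k(2) unfolding e_def[symmetric] mid_def \<epsilon>_def by (auto simp: abs_less_iff field_simps)
  ultimately have "frac (s + real t * \<theta>) = mid + e"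
    using ab by (subst frac_unique_iff) auto
  with \<open>a < mid + e\<close> \<open>mid + e < b\<close> \<open>t \<ge> t0\<close> show ?thesis by auto
qed

lemma exists_in_interval_avoiding_countable:
  fixes a b :: real
  assumes "a < b" "countable B"
  obtains s where "a < s" "s < b" "s \<notin> B"
proof -
  have "uncountable ({a<..<b} - B)"
    using assms by (intro uncountable_minus_countable) (auto simp: uncountable_open_interval)
  then obtain s where "s \<in> {a<..<b} - B"
    by (metis ex_in_conv uncountable_infinite finite.emptyI)
  then show ?thesis using that by auto
qed

lemma exists_in_interval_avoiding_finite:
  fixes a b :: real
  assumes "a < b" "finite F"
  obtains r where "a < r" "r < b" "r \<notin> F"
  using exists_in_interval_avoiding_countable[OF assms(1) countable_finite[OF assms(2)]] .

lemma closure_UN_finite: "finite I \<Longrightarrow> closure (\<Union>i\<in>I. A i) = (\<Union>i\<in>I. closure (A i))"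
  by (induction I rule: finite_induct) auto

lemma step_index_exists:
  fixes c :: "nat \<Rightarrow> real"
  assumes "1 \<le> n" "c 0 \<le> x"
  shows "\<exists>k\<in>{1..n}. c (k - 1) \<le> x \<and> (x < c k \<or> k = n)"
  using assms(1)
proof (induction n)
  case 0 then show ?case by simp
next
  case (Suc n)
  show ?case
  proof (cases "n = 0")
    case True then show ?thesis using assms(2) by auto
  next
    case False
    have "\<exists>k\<in>{1..n}. c (k - 1) \<le> x \<and> (x < c k \<or> k = n)" using Suc.IH False by simp
    then obtain k where k: "k \<in> {1..n}" "c (k - 1) \<le> x" "x < c k \<or> k = n" by blast
    show ?thesis
    proof (cases "x < c k")
      case True then show ?thesis using k by auto
    next
      case False then have "k = n" "c n \<le> x" using k by auto
      then show ?thesis by (intro bexI[of _ "Suc n"]) auto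
    qed
  qed
qed

section \<open>Rotation orbits and their weights\<close>

locale denjoy_data =
  fixes K :: nat and \<theta> :: real and y :: "nat \<Rightarrow> real"
  assumes K_pos: "1 \<le> K"
    and theta_pos: "0 < \<theta>" and theta_less_half: "\<theta> < 1/2"
    and theta_irrational: "\<theta> \<notin> \<rat>"
    and y_0: "y 0 = 0"
    and y_strict_mono: "\<And>j k. j < k \<Longrightarrow> k < K \<Longrightarrow> y j < y k"
    and y_less: "\<And>j. j < K \<Longrightarrow> y j < 1 - \<theta>"
    and y_independent:
      "\<And>j k m n. j < K \<Longrightarrow> k < K \<Longrightarrow> y j - y k = of_int m * \<theta> + of_int n \<Longrightarrow> j = k \<and> m = 0"
begin

definition orb :: "nat \<Rightarrow> nat \<Rightarrow> real" where "orb j n = frac (y j + real n * \<theta>)"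

definition hits :: "real set \<Rightarrow> nat \<Rightarrow> nat" where
  "hits I n = card {j. j < K \<and> orb j (Suc n) \<in> I}"

definition mass :: "real set \<Rightarrow> real" where
  "mass I = (\<Sum>n. (1/2)^(Suc n) * real (hits I n))"

lemma y_range: "j < K \<Longrightarrow> 0 \<le> y j \<and> y j < 1"
  using y_strict_mono[of 0 j] y_0 y_less theta_pos by (cases j) fastforce+

lemma y_independent_Ints:
  "j < K \<Longrightarrow> k < K \<Longrightarrow> y j - y k - of_int m * \<theta> \<in> \<int> \<Longrightarrow> j = k \<and> m = 0"
  using y_independent by (auto elim!: Ints_cases simp: algebra_simps)

lemma frac_add_theta:
  "0 \<le> x \<Longrightarrow> x < 1 \<Longrightarrow> frac (x + \<theta>) = (if x < 1 - \<theta> then x + \<theta> else x + \<theta> - 1)"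
  using theta_pos theta_less_half by (auto simp: frac_unique_iff)

lemma frac_1_add_theta: "frac (1 + \<theta>) = \<theta>"
  using frac_add_theta[of 0] theta_pos theta_less_half frac_1_eq[of \<theta>] by (simp add: add.commute)

lemma orb_range: "0 \<le> orb j n" "orb j n < 1"
  unfolding orb_def by (auto simp: frac_lt_1)

lemma orb_0: "j < K \<Longrightarrow> orb j 0 = y j"
  unfolding orb_def using y_range by simp

lemma orb_Suc: "orb j (Suc n) = frac (orb j n + \<theta>)"
  unfolding orb_def by (simp add: algebra_simps)

lemma orb_ne_y: "j < K \<Longrightarrow> k < K \<Longrightarrow> orb j (Suc n) \<noteq> y k"
proof
  assume jk: "j < K" "k < K" and "orb j (Suc n) = y k"
  then have "frac (y j + real (Suc n) * \<theta>) = frac (y k)" using y_range unfolding orb_def by simp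
  then have "y j + real (Suc n) * \<theta> - y k \<in> \<int>" by (simp add: frac_eq_iff_diff_Ints)
  then have "y j - y k - of_int (- int (Suc n)) * \<theta> \<in> \<int>" by (simp add: algebra_simps)
  from y_independent_Ints[OF jk this] show False by simp
qed

lemma orb_ne_1_minus_theta: "j < K \<Longrightarrow> orb j (Suc n) \<noteq> 1 - \<theta>"
proof
  assume j: "j < K" and "orb j (Suc n) = 1 - \<theta>"
  then have "frac (y j + real (Suc n) * \<theta>) = frac (1 - \<theta>)"
    using theta_pos theta_less_half unfolding orb_def by simp
  then have "y j + real (Suc n) * \<theta> - (1 - \<theta>) \<in> \<int>" by (simp add: frac_eq_iff_diff_Ints)
  then have "y j + real (Suc n) * \<theta> - (1 - \<theta>) + 1 \<in> \<int>" using Ints_add Ints_1 by blast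
  moreover have "y j + real (Suc n) * \<theta> - (1 - \<theta>) + 1 = y j - y 0 - of_int (- int (Suc (Suc n))) * \<theta>"
    by (simp add: algebra_simps y_0)
  ultimately have "y j - y 0 - of_int (- int (Suc (Suc n))) * \<theta> \<in> \<int>" by metis
  from y_independent_Ints[OF j _ this] K_pos show False by simp
qed

lemma orb_ne_0: "j < K \<Longrightarrow> orb j (Suc n) \<noteq> 0"
  using orb_ne_y[of j 0 n] K_pos y_0 by simp

lemma hits_le: "hits I n \<le> K"
  unfolding hits_def by (rule order_trans[OF card_mono[of "{..<K}"]]) auto

lemma half_powers_sums: "(\<lambda>n. (1/2::real)^(Suc n)) sums 1"
  using sums_mult[OF geometric_sums[of "1/2::real"], of "1/2"] by simp

lemma mass_summable: "summable (\<lambda>n. (1/2::real)^(Suc n) * real (hits I n))"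
proof (rule summable_comparison_test'[where g="\<lambda>n. real K * (1/2)^(Suc n)"])
  show "summable (\<lambda>n. real K * (1/2::real)^(Suc n))"
    using half_powers_sums sums_summable summable_mult by blast
  show "norm ((1/2::real)^(Suc n) * real (hits I n)) \<le> real K * (1/2)^(Suc n)" for n
    using hits_le[of I n] by (simp add: mult.commute)
qed

lemma mass_nonneg: "0 \<le> mass I"
  unfolding mass_def by (intro suminf_nonneg mass_summable) simp

lemma mass_mono: "I \<subseteq> J \<Longrightarrow> mass I \<le> mass J"
  unfolding mass_def by (intro suminf_le mass_summable) (auto simp: hits_def intro!: card_mono)

lemma mass_cong:
  "(\<And>j n. j < K \<Longrightarrow> orb j (Suc n) \<in> I \<longleftrightarrow> orb j (Suc n) \<in> J) \<Longrightarrow> mass I = mass J"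
  unfolding mass_def hits_def by (metis (no_types, lifting) Collect_cong)

lemma mass_union: "I \<inter> J = {} \<Longrightarrow> mass (I \<union> J) = mass I + mass J"
proof -
  assume IJ: "I \<inter> J = {}"
  have "hits (I \<union> J) n = hits I n + hits J n" for n
  proof -
    have "{j. j < K \<and> orb j (Suc n) \<in> I \<union> J}
        = {j. j < K \<and> orb j (Suc n) \<in> I} \<union> {j. j < K \<and> orb j (Suc n) \<in> J}" by auto
    then show ?thesis unfolding hits_def using IJ by (subst card_Un_disjoint[symmetric]) auto
  qed
  then show ?thesis
    unfolding mass_def by (subst suminf_add[OF mass_summable mass_summable]) (simp add: distrib_left)
qed

lemma mass_diff: "I \<subseteq> J \<Longrightarrow> mass (J - I) = mass J - mass I"
  using mass_union[of I "J - I"] by (simp add: Un_absorb1)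

lemma mass_eq_0: "(\<And>j n. j < K \<Longrightarrow> orb j (Suc n) \<notin> I) \<Longrightarrow> mass I = 0"
  using mass_cong[of I "{}"] unfolding mass_def hits_def by simp

lemma mass_pos:
  assumes "j < K" "orb j (Suc n) \<in> I"
  shows "mass I > 0"
proof -
  have "j \<in> {j. j < K \<and> orb j (Suc n) \<in> I}" using assms by auto
  then have "hits I n \<ge> 1" unfolding hits_def by (metis One_nat_def Suc_leI card_gt_0_iff empty_iff finite_Collect_less_nat finite_Collect_conjI)
  then have "0 < (1/2::real)^(Suc n) * real (hits I n)" by simp
  also have "\<dots> \<le> mass I"
    unfolding mass_def using sum_le_suminf[OF mass_summable, of "{n}" I] by simp
  finally show ?thesis .
qed

lemma mass_UNIV: "mass UNIV = real K"
proof -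
  have "mass UNIV = (\<Sum>n. real K * (1/2::real)^(Suc n))"
    unfolding mass_def hits_def by (simp add: mult.commute)
  also have "\<dots> = real K" using sums_unique[OF sums_mult[OF half_powers_sums, of "real K"]] by simp
  finally show ?thesis .
qed

lemma mass_le_if_no_early_hits:
  assumes "\<And>j n. j < K \<Longrightarrow> n < M \<Longrightarrow> orb j (Suc n) \<notin> I"
  shows "mass I \<le> real K * (1/2)^M"
proof -
  define a where "a n = (1/2::real)^(Suc n) * real (hits I n)" for n
  have "a n = 0" if "n < M" for n using assms that unfolding a_def hits_def by auto
  then have "sum a {..<M} = 0" by simp
  have s: "summable a" unfolding a_def by (rule mass_summable)
  have "mass I = (\<Sum>n. a (n + M)) + sum a {..<M}"
    unfolding mass_def a_def[symmetric] by (rule suminf_split_initial_segment[OF s])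
  also have "\<dots> = (\<Sum>n. a (n + M))" using \<open>sum a {..<M} = 0\<close> by simp
  also have "\<dots> \<le> (\<Sum>n. real K * (1/2)^M * (1/2)^(Suc n))"
  proof (rule suminf_le)
    show "a (n + M) \<le> real K * (1/2)^M * (1/2)^(Suc n)" for n
      using hits_le[of I "n+M"] unfolding a_def by (simp add: power_add mult_ac mult_left_mono)
    show "summable (\<lambda>n. a (n + M))" using s by (simp add: summable_iff_shift)
    show "summable (\<lambda>n. real K * (1/2)^M * (1/2::real)^(Suc n))"
      using half_powers_sums sums_summable summable_mult by blast
  qed
  also have "\<dots> = real K * (1/2)^M"
    using sums_unique[OF sums_mult[OF half_powers_sums, of "real K * (1/2)^M"]] by simp
  finally show ?thesis .
qed

text \<open>Only the finitely many orbit points orb j (n + 1) with n < M carry weight at least 2^-M,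
  and a punctured neighbourhood of s avoiding them has mass at most K 2^-M.\<close>

lemma mass_small_near:
  assumes "e > 0"
  obtains \<eta> where "\<eta> > 0" "\<And>I. I \<subseteq> {s - \<eta><..<s + \<eta>} - {s} \<Longrightarrow> mass I < e"
proof -
  obtain M where M: "(1/2::real)^M < e / (real K + 1)"
    using real_arch_pow_inv[of "e / (real K + 1)" "1/2"] assms by auto
  have "real K * (1/2::real)^M \<le> (real K + 1) * (1/2)^M" by simp
  also have "\<dots> < e" using M by (simp add: field_simps)
  finally have KM: "real K * (1/2::real)^M < e" .
  define F where "F = (\<lambda>(j, n). orb j (Suc n)) ` ({..<K} \<times> {..<M})"
  obtain \<eta> where \<eta>: "\<eta> > 0" "\<And>x. x \<in> F \<Longrightarrow> x \<noteq> s \<Longrightarrow> \<eta> \<le> dist s x"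
    using finite_set_avoid[of F s] unfolding F_def by blast
  have "mass I < e" if I: "I \<subseteq> {s - \<eta><..<s + \<eta>} - {s}" for I
  proof -
    have "orb j (Suc n) \<notin> I" if "j < K" "n < M" for j n
    proof
      assume "orb j (Suc n) \<in> I"
      moreover have "orb j (Suc n) \<in> F" unfolding F_def using that by force
      ultimately show False using \<eta>(2) I by (force simp: dist_real_def)
    qed
    then show ?thesis using mass_le_if_no_early_hits[of M I] KM by fastforce
  qed
  then show thesis using that \<eta>(1) by blast
qed

lemma mass_open_interval_pos:
  assumes "0 \<le> a" "a < b" "b \<le> 1"
  shows "mass {a<..<b} > 0"
proof -
  obtain t where t: "t \<ge> 1" "frac (0 + real t * \<theta>) \<in> {a<..<b}"
    using irrational_rotation_hits_interval[OF theta_irrational assms] by blast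
  then obtain n where "t = Suc n" by (cases t) auto
  then have "orb 0 (Suc n) \<in> {a<..<b}" using t y_0 unfolding orb_def by simp
  then show ?thesis using mass_pos[of 0 n] K_pos by auto
qed

text \<open>J contains no point orb j 1 (its preimage I contains no y j), and its other orbit points
  are the images of those of I, with half the weight.\<close>

lemma mass_rotate:
  assumes J: "\<And>x. 0 \<le> x \<Longrightarrow> x < 1 \<Longrightarrow> (frac (x + \<theta>) \<in> J \<longleftrightarrow> x \<in> I)"
    and no_y: "\<And>j. j < K \<Longrightarrow> y j \<notin> I"
  shows "mass J = mass I / 2"
proof -
  have hits0: "hits J 0 = 0"
  proof -
    have "orb j (Suc 0) \<notin> J" if "j < K" for j
      using J[of "orb j 0"] orb_range[of j 0] no_y[OF that] orb_0[OF that] orb_Suc[of j 0] by auto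
    then show ?thesis unfolding hits_def by auto
  qed
  have hits_Suc: "hits J (Suc n) = hits I n" for n
  proof -
    have "orb j (Suc (Suc n)) \<in> J \<longleftrightarrow> orb j (Suc n) \<in> I" for j
      using J[of "orb j (Suc n)"] orb_range[of j "Suc n"] orb_Suc[of j "Suc n"] by auto
    then show ?thesis unfolding hits_def by simp
  qed
  define a where "a n = (1/2::real)^(Suc n) * real (hits J n)" for n
  have "summable a" unfolding a_def by (rule mass_summable)
  have "mass J = (\<Sum>n. a (Suc n)) + a 0"
    unfolding mass_def a_def[symmetric] using suminf_split_head[OF \<open>summable a\<close>] by simp
  also have "\<dots> = (\<Sum>n. (1/2::real)^(Suc n) * real (hits I n) / 2)"
    unfolding a_def hits_Suc hits0 by (simp add: mult_ac)
  also have "\<dots> = mass I / 2" unfolding mass_def by (rule suminf_divide[OF mass_summable])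
  finally show ?thesis .
qed

section \<open>Blowing up the rotation\<close>

text \<open>The point s of [0, 1] is blown up into the interval [cdf_lt s, cdf_le s]; over s x says
  that x lies in it.\<close>

definition cdf_lt :: "real \<Rightarrow> real" where "cdf_lt s = mass {..<s}"
definition cdf_le :: "real \<Rightarrow> real" where "cdf_le s = mass {..s}"
definition over :: "real \<Rightarrow> real \<Rightarrow> bool" where "over s x \<longleftrightarrow> cdf_lt s \<le> x \<and> x \<le> cdf_le s"

definition cut_pt :: "nat \<Rightarrow> real" where
  "cut_pt i = (if i < K then y i else if i = K then 1 - \<theta> else 1)"

lemma cdf_lt_le_cdf_le: "cdf_lt s \<le> cdf_le s"
  unfolding cdf_lt_def cdf_le_def by (rule mass_mono) auto

lemma cdf_lt_mono: "s \<le> t \<Longrightarrow> cdf_lt s \<le> cdf_lt t"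
  unfolding cdf_lt_def by (rule mass_mono) auto

lemma cdf_le_mono: "s \<le> t \<Longrightarrow> cdf_le s \<le> cdf_le t"
  unfolding cdf_le_def by (rule mass_mono) auto

lemma cdf_le_le_cdf_lt: "s < t \<Longrightarrow> cdf_le s \<le> cdf_lt t"
  unfolding cdf_lt_def cdf_le_def by (rule mass_mono) auto

lemma cdf_lt_minus_cdf_le: "s < t \<Longrightarrow> cdf_lt t - cdf_le s = mass {s<..<t}"
  unfolding cdf_lt_def cdf_le_def by (subst mass_diff[symmetric]) (auto intro!: arg_cong[where f=mass])

lemma cdf_le_diff: "s \<le> t \<Longrightarrow> cdf_le t - cdf_le s = mass {s<..t}"
  unfolding cdf_le_def by (subst mass_diff[symmetric]) (auto intro!: arg_cong[where f=mass])

lemma cdf_lt_diff: "s \<le> t \<Longrightarrow> cdf_lt t - cdf_lt s = mass {s..<t}"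
  unfolding cdf_lt_def by (subst mass_diff[symmetric]) (auto intro!: arg_cong[where f=mass])

lemma cdf_le_minus_cdf_lt: "cdf_le s - cdf_lt s = mass {s}"
  unfolding cdf_lt_def cdf_le_def by (subst mass_diff[symmetric]) (auto intro!: arg_cong[where f=mass])

lemma cdf_le_less_cdf_lt: "0 \<le> s \<Longrightarrow> s < t \<Longrightarrow> t \<le> 1 \<Longrightarrow> cdf_le s < cdf_lt t"
  using cdf_lt_minus_cdf_le[of s t] mass_open_interval_pos[of s t] by simp

lemma cdf_le_0: "cdf_le 0 = 0"
  unfolding cdf_le_def using orb_range orb_ne_0 by (intro mass_eq_0) (metis atMost_iff order_antisym)

lemma cdf_lt_0: "cdf_lt 0 = 0"
  using cdf_lt_le_cdf_le[of 0] cdf_le_0 mass_nonneg unfolding cdf_lt_def by (metis order_antisym)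

lemma cdf_lt_1: "cdf_lt 1 = real K"
  unfolding cdf_lt_def using orb_range mass_UNIV by (subst mass_cong[of _ UNIV]) auto

lemma cdf_le_1: "cdf_le 1 = real K"
  unfolding cdf_le_def using orb_range mass_UNIV by (subst mass_cong[of _ UNIV]) (auto simp: less_imp_le)

lemma cdf_lt_range: "0 \<le> cdf_lt s" "cdf_lt s \<le> real K"
  using mass_nonneg mass_mono[of "{..<s}" UNIV] mass_UNIV unfolding cdf_lt_def by auto

lemma cdf_le_range: "0 \<le> cdf_le s" "cdf_le s \<le> real K"
  using mass_nonneg mass_mono[of "{..s}" UNIV] mass_UNIV unfolding cdf_le_def by auto

lemma over_range: "over s x \<Longrightarrow> 0 \<le> x \<and> x \<le> real K"
  unfolding over_def using cdf_lt_range[of s] cdf_le_range[of s] by linarith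

lemma cdf_lt_left_continuous:
  assumes "e > 0"
  obtains \<eta> where "\<eta> > 0" "\<And>r. s - \<eta> < r \<Longrightarrow> r < s \<Longrightarrow> cdf_lt s - e < cdf_lt r"
proof -
  obtain \<eta> where \<eta>: "\<eta> > 0" "\<And>I. I \<subseteq> {s - \<eta><..<s + \<eta>} - {s} \<Longrightarrow> mass I < e"
    using mass_small_near[OF assms] by blast
  have "cdf_lt s - e < cdf_lt r" if "s - \<eta> < r" "r < s" for r
  proof -
    have "{r..<s} \<subseteq> {s - \<eta><..<s + \<eta>} - {s}" using that \<eta>(1) by auto
    then have "mass {r..<s} < e" by (rule \<eta>(2))
    then show ?thesis using cdf_lt_diff[of r s] that by simp
  qed
  with \<eta>(1) that show thesis by blast
qed

lemma cdf_le_right_continuous: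
  assumes "e > 0"
  obtains \<eta> where "\<eta> > 0" "\<And>r. s < r \<Longrightarrow> r < s + \<eta> \<Longrightarrow> cdf_le r < cdf_le s + e"
proof -
  obtain \<eta> where \<eta>: "\<eta> > 0" "\<And>I. I \<subseteq> {s - \<eta><..<s + \<eta>} - {s} \<Longrightarrow> mass I < e"
    using mass_small_near[OF assms] by blast
  have "cdf_le r < cdf_le s + e" if "s < r" "r < s + \<eta>" for r
  proof -
    have "{s<..r} \<subseteq> {s - \<eta><..<s + \<eta>} - {s}" using that \<eta>(1) by auto
    then have "mass {s<..r} < e" by (rule \<eta>(2))
    then show ?thesis using cdf_le_diff[of s r] that by simp
  qed
  with \<eta>(1) that show thesis by blast
qed

lemma over_unique:
  assumes "s \<in> {0..1}" "t \<in> {0..1}" "over s x" "over t x"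
  shows "s = t"
  using cdf_le_less_cdf_lt[of s t] cdf_le_less_cdf_lt[of t s] assms unfolding over_def
  by (cases s t rule: linorder_cases) auto

text \<open>Every x \<in> [0, K] lies over s = sup {t \<in> [0, 1]. cdf_lt t \<le> x}, by the one-sided continuity
  of the two distribution functions.\<close>

lemma over_exists:
  assumes "0 \<le> x" "x \<le> real K"
  obtains s where "s \<in> {0..1}" "over s x"
proof -
  define S where "S = {t \<in> {0..1}. cdf_lt t \<le> x}"
  have "0 \<in> S" unfolding S_def using cdf_lt_0 assms by simp
  have bdd: "bdd_above S" unfolding S_def by (auto intro: bdd_aboveI[of _ 1])
  define s where "s = Sup S"
  have s: "0 \<le> s" "s \<le> 1"
    unfolding s_def using cSup_upper[OF \<open>0 \<in> S\<close> bdd] \<open>0 \<in> S\<close>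
    by (auto intro!: cSup_least simp: S_def)
  have "cdf_lt s \<le> x"
  proof (rule ccontr)
    assume "\<not> cdf_lt s \<le> x"
    then obtain \<eta> where \<eta>: "\<eta> > 0" "\<And>r. s - \<eta> < r \<Longrightarrow> r < s \<Longrightarrow> x < cdf_lt r"
      using cdf_lt_left_continuous[of "cdf_lt s - x" s] by auto
    have "s - \<eta> < Sup S" using \<eta>(1) s_def by simp
    then obtain t where t: "t \<in> S" "s - \<eta> < t" using less_cSup_iff[OF _ bdd] \<open>0 \<in> S\<close> by blast
    have "t \<le> s" unfolding s_def using cSup_upper[OF t(1) bdd] .
    then show False
      using t \<eta>(2)[of t] \<open>\<not> cdf_lt s \<le> x\<close> unfolding S_def by (cases "t = s") auto
  qed
  moreover have "x \<le> cdf_le s"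
  proof (rule ccontr)
    assume x: "\<not> x \<le> cdf_le s"
    then have "s \<noteq> 1" using cdf_le_1 assms by auto
    with s have "s < 1" by simp
    obtain \<eta> where \<eta>: "\<eta> > 0" "\<And>r. s < r \<Longrightarrow> r < s + \<eta> \<Longrightarrow> cdf_le r < x"
      using cdf_le_right_continuous[of "x - cdf_le s" s] x by auto
    define r where "r = s + min \<eta> (1 - s) / 2"
    have "min \<eta> (1 - s) \<le> 1 - s" "min \<eta> (1 - s) \<le> \<eta>" "min \<eta> (1 - s) > 0" using \<eta>(1) \<open>s < 1\<close> by auto
    then have r: "s < r" "r < s + \<eta>" "r \<le> 1" unfolding r_def by (auto simp: field_simps)
    then have "r \<in> S" unfolding S_def using \<eta>(2)[OF r(1,2)] cdf_lt_le_cdf_le[of r] s by simp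
    then show False using r cSup_upper[OF _ bdd] unfolding s_def by fastforce
  qed
  ultimately show thesis using that s unfolding over_def by auto
qed

lemma cut_pt_0: "cut_pt 0 = 0" unfolding cut_pt_def using K_pos y_0 by simp
lemma cut_pt_Suc_K: "cut_pt (Suc K) = 1" unfolding cut_pt_def by simp
lemma cut_pt_K: "cut_pt K = 1 - \<theta>" unfolding cut_pt_def by simp

lemma cut_pt_strict_mono: "i < j \<Longrightarrow> j \<le> Suc K \<Longrightarrow> cut_pt i < cut_pt j"
  unfolding cut_pt_def using y_strict_mono y_less theta_pos theta_less_half by (auto, smt (verit) y_less)

lemma cut_pt_range: "i \<le> Suc K \<Longrightarrow> 0 \<le> cut_pt i \<and> cut_pt i \<le> 1"
  unfolding cut_pt_def using y_range theta_pos theta_less_half by (auto simp: less_imp_le)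

lemma cut_pt_mono: "i \<le> j \<Longrightarrow> j \<le> Suc K \<Longrightarrow> cut_pt i \<le> cut_pt j"
  using cut_pt_strict_mono by (cases "i = j") (auto simp: less_imp_le)

lemma orb_ne_cut_pt: "j < K \<Longrightarrow> i \<le> Suc K \<Longrightarrow> orb j (Suc n) \<noteq> cut_pt i"
  unfolding cut_pt_def using orb_ne_y orb_ne_1_minus_theta orb_range by (auto, metis less_irrefl)

lemma cdf_le_cut_pt: "i \<le> Suc K \<Longrightarrow> cdf_le (cut_pt i) = cdf_lt (cut_pt i)"
  using cdf_le_minus_cdf_lt[of "cut_pt i"] orb_ne_cut_pt by (simp add: mass_eq_0)

lemma cdf_lt_less_cdf_le_orb: "j < K \<Longrightarrow> cdf_lt (orb j (Suc n)) < cdf_le (orb j (Suc n))"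
  using mass_pos[of j n "{orb j (Suc n)}"] cdf_le_minus_cdf_lt[of "orb j (Suc n)"] by simp

lemma over_cut_pt_iff: "i \<le> Suc K \<Longrightarrow> over (cut_pt i) x \<longleftrightarrow> x = cdf_lt (cut_pt i)"
  unfolding over_def using cdf_le_cut_pt by fastforce

lemma cut_pt_index_exists:
  assumes "0 \<le> r"
  shows "\<exists>k\<in>{1..Suc K}. cut_pt (k - 1) \<le> r \<and> (r < cut_pt k \<or> k = Suc K)"
  using step_index_exists[of "Suc K" cut_pt r] assms cut_pt_0 by auto

lemma y_not_between_cuts:
  assumes "1 \<le> k" "k \<le> Suc K" "cut_pt (k - 1) < t" "t < cut_pt k" "j < K"
  shows "y j \<noteq> t"
proof
  assume "y j = t"
  then have "cut_pt j = t" unfolding cut_pt_def using assms by simp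
  then have "k - 1 < j" "j < k" using cut_pt_mono[of j "k - 1"] cut_pt_mono[of k j] assms by force+
  then show False by simp
qed

section \<open>The lifted map\<close>

text \<open>c 1, ..., c K are the discontinuities of the map; c 0 = 0 and c (Suc K) = K are the ends of
  the interval. Over the piece k between c (k - 1) and c k (relatively open in [0, K]) the rotation
  is the translation by rot_shift k, and the map is the affine branch k of slope 1/2.\<close>

definition c :: "nat \<Rightarrow> real" where "c i = cdf_lt (cut_pt i)"
definition rot_shift :: "nat \<Rightarrow> real" where "rot_shift k = (if k = Suc K then \<theta> - 1 else \<theta>)"
definition branch :: "nat \<Rightarrow> real \<Rightarrow> real" where
  "branch k x = x / 2 + cdf_le (cut_pt (k - 1) + rot_shift k) - c (k - 1) / 2"
definition f :: "real \<Rightarrow> real" where "f x = branch (Suc (card {i\<in>{1..K}. c i \<le> x})) x"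
definition piece :: "nat \<Rightarrow> real set" where
  "piece k = {0..real K} \<inter>
     {(if k = 1 then -1 else c (k - 1))<..<(if k = Suc K then real K + 1 else c k)}"

lemma c_0: "c 0 = 0" unfolding c_def cut_pt_0 cdf_lt_0 ..
lemma c_Suc_K: "c (Suc K) = real K" unfolding c_def cut_pt_Suc_K cdf_lt_1 ..
lemma c_eq_cdf_le: "i \<le> Suc K \<Longrightarrow> c i = cdf_le (cut_pt i)" unfolding c_def using cdf_le_cut_pt by simp

lemma c_strict_mono: "i < j \<Longrightarrow> j \<le> Suc K \<Longrightarrow> c i < c j"
proof -
  assume ij: "i < j" "j \<le> Suc K"
  then have "c i = cdf_le (cut_pt i)" using c_eq_cdf_le by simp
  also have "\<dots> < cdf_lt (cut_pt j)"
    using ij cut_pt_strict_mono cut_pt_range by (intro cdf_le_less_cdf_lt) auto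
  finally show ?thesis unfolding c_def .
qed

lemma c_mono: "i \<le> j \<Longrightarrow> j \<le> Suc K \<Longrightarrow> c i \<le> c j"
  using c_strict_mono by (cases "i = j") (auto simp: less_imp_le)

lemma c_range: "i \<le> Suc K \<Longrightarrow> 0 \<le> c i \<and> c i \<le> real K"
  using c_mono[of 0 i] c_mono[of i "Suc K"] c_0 c_Suc_K by auto

lemma over_between_cuts:
  assumes k: "1 \<le> k" "k \<le> Suc K" and s: "0 \<le> s" "s \<le> 1"
    and x: "over s x" "c (k - 1) \<le> x" "x \<le> c k"
  shows "cut_pt (k - 1) \<le> s" "s \<le> cut_pt k"
proof -
  show "cut_pt (k - 1) \<le> s"
  proof (rule ccontr)
    assume "\<not> cut_pt (k - 1) \<le> s"
    then have "cdf_le s < c (k - 1)"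
      using s cut_pt_range[of "k - 1"] k unfolding c_def by (intro cdf_le_less_cdf_lt) auto
    then show False using x unfolding over_def by simp
  qed
  show "s \<le> cut_pt k"
  proof (rule ccontr)
    assume "\<not> s \<le> cut_pt k"
    then have "c k < cdf_lt s"
      using s cut_pt_range[of k] k c_eq_cdf_le[of k] by (simp add: cdf_le_less_cdf_lt)
    then show False using x unfolding over_def by simp
  qed
qed

lemma branch_mono: "x \<le> x' \<Longrightarrow> branch k x \<le> branch k x'"
  unfolding branch_def by simp

lemma f_eq_branch:
  assumes k: "1 \<le> k" "k \<le> Suc K" and x: "c (k - 1) \<le> x" "x < c k \<or> k = Suc K"
  shows "f x = branch k x"
proof -
  have "{i\<in>{1..K}. c i \<le> x} = {1..k - 1}"
  proof (intro set_eqI iffI)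
    fix i assume i: "i \<in> {i\<in>{1..K}. c i \<le> x}"
    show "i \<in> {1..k - 1}"
    proof (rule ccontr)
      assume "i \<notin> {1..k - 1}"
      then have "c k \<le> c i" "k \<noteq> Suc K" using i c_mono by auto
      then show False using x i by auto
    qed
  next
    fix i assume "i \<in> {1..k - 1}"
    then show "i \<in> {i\<in>{1..K}. c i \<le> x}" using c_mono[of i "k - 1"] x k by force
  qed
  then show ?thesis unfolding f_def using k by simp
qed

lemma piece_index_exists:
  assumes "0 \<le> x"
  shows "\<exists>k\<in>{1..Suc K}. c (k - 1) \<le> x \<and> (x < c k \<or> k = Suc K)"
  using step_index_exists[of "Suc K" c x] assms c_0 by auto

lemma rotation_on_cut_interval:
  assumes "1 \<le> k" "k \<le> Suc K" "cut_pt (k - 1) \<le> s" "s < cut_pt k"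
  shows "frac (s + \<theta>) = s + rot_shift k"
proof -
  have "0 \<le> cut_pt (k - 1)" "cut_pt k \<le> 1" using assms cut_pt_range[of "k - 1"] cut_pt_range[of k] by auto
  then have "0 \<le> s" "s < 1" using assms by auto
  moreover have "s < 1 - \<theta> \<longleftrightarrow> k \<noteq> Suc K"
    using assms cut_pt_K cut_pt_mono[of k K] by (cases "k = Suc K") auto
  ultimately show ?thesis using frac_add_theta[of s] unfolding rot_shift_def by auto
qed

text \<open>The translation by rot_shift k maps the measure on (cut_pt (k - 1), s] to half of itself
  (mass_rotate), which is why the slope of every branch is 1/2.\<close>

lemma branch_cdf_le:
  assumes k: "1 \<le> k" "k \<le> Suc K" and s: "cut_pt (k - 1) \<le> s" "s < cut_pt k"
  shows "branch k (cdf_le s) = cdf_le (s + rot_shift k)"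
proof (cases "s = cut_pt (k - 1)")
  case True
  then show ?thesis using c_eq_cdf_le[of "k - 1"] k unfolding branch_def by simp
next
  case False
  define U where "U = cut_pt (k - 1)"
  have Us: "U < s" using False s U_def by simp
  have U0: "0 \<le> U" "cut_pt k \<le> 1" unfolding U_def using cut_pt_range k by auto
  have wrap: "k \<noteq> Suc K \<Longrightarrow> cut_pt k \<le> 1 - \<theta>" "k = Suc K \<Longrightarrow> U = 1 - \<theta>"
    using cut_pt_mono[of k K] cut_pt_K k unfolding U_def by auto
  have "mass {U + rot_shift k<..s + rot_shift k} = mass {U<..s} / 2"
  proof (intro mass_rotate)
    show "frac (x + \<theta>) \<in> {U + rot_shift k<..s + rot_shift k} \<longleftrightarrow> x \<in> {U<..s}" if "0 \<le> x" "x < 1" for x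
      using frac_add_theta[OF that] that Us U0 s wrap theta_pos theta_less_half
      unfolding rot_shift_def U_def[symmetric] by (cases "k = Suc K") auto
    show "y j \<notin> {U<..s}" if "j < K" for j
      using y_not_between_cuts[OF k, of _ j] s that U_def by fastforce
  qed
  moreover have "cdf_le (s + rot_shift k) - cdf_le (U + rot_shift k) = mass {U + rot_shift k<..s + rot_shift k}"
    "cdf_le s - cdf_le U = mass {U<..s}" using Us by (simp_all add: cdf_le_diff)
  moreover have "cdf_le U = c (k - 1)" unfolding U_def using c_eq_cdf_le k by simp
  ultimately show ?thesis unfolding branch_def U_def[symmetric] by simp
qed

lemma branch_cdf_lt:
  assumes k: "1 \<le> k" "k \<le> Suc K" and s: "cut_pt (k - 1) < s" "s \<le> cut_pt k"
  shows "branch k (cdf_lt s) = cdf_lt (s + rot_shift k)"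
proof -
  define U where "U = cut_pt (k - 1)"
  have Us: "U < s" using s U_def by simp
  have U0: "0 \<le> U" "cut_pt k \<le> 1" unfolding U_def using cut_pt_range k by auto
  have wrap: "k \<noteq> Suc K \<Longrightarrow> cut_pt k \<le> 1 - \<theta>" "k = Suc K \<Longrightarrow> U = 1 - \<theta>"
    using cut_pt_mono[of k K] cut_pt_K k unfolding U_def by auto
  have "mass {U + rot_shift k<..<s + rot_shift k} = mass {U<..<s} / 2"
  proof (intro mass_rotate)
    show "frac (x + \<theta>) \<in> {U + rot_shift k<..<s + rot_shift k} \<longleftrightarrow> x \<in> {U<..<s}" if "0 \<le> x" "x < 1" for x
      using frac_add_theta[OF that] that Us U0 s wrap theta_pos theta_less_half
      unfolding rot_shift_def U_def[symmetric] by (cases "k = Suc K") auto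
    show "y j \<notin> {U<..<s}" if "j < K" for j
      using y_not_between_cuts[OF k _ _ that] s U_def by fastforce
  qed
  moreover have "cdf_lt (s + rot_shift k) - cdf_le (U + rot_shift k) = mass {U + rot_shift k<..<s + rot_shift k}"
    "cdf_lt s - cdf_le U = mass {U<..<s}" using Us by (simp_all add: cdf_lt_minus_cdf_le)
  moreover have "cdf_le U = c (k - 1)" unfolding U_def using c_eq_cdf_le k by simp
  ultimately show ?thesis unfolding branch_def U_def[symmetric] by simp
qed

lemma branch_over:
  assumes k: "1 \<le> k" "k \<le> Suc K" and s: "cut_pt (k - 1) \<le> s" "s \<le> cut_pt k" and x: "over s x"
  shows "over (s + rot_shift k) (branch k x)"
proof -
  consider "s = cut_pt (k - 1)" | "s = cut_pt k" | "cut_pt (k - 1) < s" "s < cut_pt k"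
    using s by fastforce
  then show ?thesis
  proof cases
    case 1
    then have "branch k x = cdf_le (s + rot_shift k)"
      using x k branch_cdf_le[OF k, of s] cut_pt_strict_mono[of "k - 1" k] over_cut_pt_iff c_eq_cdf_le
      by (simp add: c_def)
    then show ?thesis unfolding over_def using cdf_lt_le_cdf_le by simp
  next
    case 2
    then have "branch k x = cdf_lt (s + rot_shift k)"
      using x k branch_cdf_lt[OF k, of s] cut_pt_strict_mono[of "k - 1" k] over_cut_pt_iff by simp
    then show ?thesis unfolding over_def using cdf_lt_le_cdf_le by simp
  next
    case 3
    then show ?thesis using x branch_mono[of _ x k] branch_mono[of x _ k]
      branch_cdf_le[OF k] branch_cdf_lt[OF k] unfolding over_def by fastforce
  qed
qed

lemma f_over_cases:
  assumes s: "0 \<le> s" "s \<le> 1" and x: "over s x"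
  obtains k where "k \<in> {1..Suc K}" "f x = branch k x" "cut_pt (k - 1) \<le> s" "s \<le> cut_pt k"
    "frac (s + \<theta>) = s + rot_shift k"
proof -
  obtain k where k: "k \<in> {1..Suc K}" "c (k - 1) \<le> x" "x < c k \<or> k = Suc K"
    using piece_index_exists over_range[OF x] by blast
  have k1: "1 \<le> k" "k \<le> Suc K" using k by auto
  have "x \<le> c k" using k(3) over_range[OF x] c_Suc_K by auto
  then have s1: "cut_pt (k - 1) \<le> s" using over_between_cuts[OF k1 s x k(2)] by blast
  have s2: "s < cut_pt k \<or> (k = Suc K \<and> s = 1)"
  proof (rule ccontr)
    assume a: "\<not> (s < cut_pt k \<or> (k = Suc K \<and> s = 1))"
    then have "c k \<le> cdf_lt s" "k \<noteq> Suc K"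
      using cdf_lt_mono s cut_pt_Suc_K unfolding c_def by auto
    then show False using x k(3) unfolding over_def by simp
  qed
  have "frac (s + \<theta>) = s + rot_shift k"
    using s2 rotation_on_cut_interval[OF k1 s1] frac_1_add_theta unfolding rot_shift_def by auto
  moreover have "s \<le> cut_pt k" using s2 cut_pt_Suc_K by auto
  ultimately show thesis using that k(1) f_eq_branch[OF k1 k(2,3)] s1 by blast
qed

lemma f_over:
  assumes s: "0 \<le> s" "s \<le> 1" and x: "over s x"
  shows "over (frac (s + \<theta>)) (f x)"
  using f_over_cases[OF assms] branch_over x by (metis atLeastAtMost_iff)

lemma f_range: "0 \<le> x \<Longrightarrow> x \<le> real K \<Longrightarrow> 0 \<le> f x \<and> f x \<le> real K"
  using over_exists f_over over_range by (metis atLeastAtMost_iff)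

lemma f_iter_over:
  assumes s: "0 \<le> s" "s < 1" and x: "over s x"
  shows "over (frac (s + real n * \<theta>)) ((f ^^ n) x)"
proof (induction n)
  case 0
  show ?case using x s by simp
next
  case (Suc n)
  have "over (frac (frac (s + real n * \<theta>) + \<theta>)) (f ((f ^^ n) x))"
    using f_over[OF frac_range Suc] .
  then show ?case by (simp add: algebra_simps)
qed

lemma f_cdf:
  assumes s: "0 \<le> s" "s \<le> 1" and x: "x = cdf_lt s \<or> x = cdf_le s"
  shows "f x = cdf_lt (frac (s + \<theta>)) \<or> f x = cdf_le (frac (s + \<theta>))"
proof -
  have "over s x" using x cdf_lt_le_cdf_le unfolding over_def by auto
  then obtain k where k: "k\<in>{1..Suc K}" "f x = branch k x" "cut_pt (k - 1) \<le> s" "s \<le> cut_pt k"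
    "frac (s + \<theta>) = s + rot_shift k"
    using f_over_cases[OF s] by blast
  have k1: "1 \<le> k" "k \<le> Suc K" using k by auto
  consider "s = cut_pt (k - 1)" | "cut_pt (k - 1) < s" "x = cdf_lt s" | "s = cut_pt k" |
    "cut_pt (k - 1) < s" "s < cut_pt k" "x = cdf_le s"
    using x k(3,4) by fastforce
  then show ?thesis
  proof cases
    case 1
    then have "x = cdf_le s" using cdf_le_cut_pt k1 x by auto
    then show ?thesis using branch_cdf_le[OF k1] 1 cut_pt_strict_mono[of "k - 1" k] k1 k by simp
  next
    case 2
    then show ?thesis using branch_cdf_lt[OF k1] k by simp
  next
    case 3
    then have "x = cdf_lt s" using cdf_le_cut_pt k1 x by auto
    then show ?thesis using branch_cdf_lt[OF k1] 3 cut_pt_strict_mono[of "k - 1" k] k1 k by simp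
  next
    case 4
    then show ?thesis using branch_cdf_le[OF k1] k by simp
  qed
qed

section \<open>The set of fibre endpoints\<close>

definition Lambda :: "real set" where
  "Lambda = {x. \<exists>s\<in>{0..1}. x = cdf_lt s \<or> x = cdf_le s}"

lemma Lambda_range: "x \<in> Lambda \<Longrightarrow> 0 \<le> x \<and> x \<le> real K"
  unfolding Lambda_def using cdf_lt_range cdf_le_range by auto

lemma Lambda_cases:
  assumes "z \<in> Lambda"
  obtains s where "0 < s" "s \<le> 1" "z = cdf_lt s" | s where "0 \<le> s" "s < 1" "z = cdf_le s"
proof -
  obtain s where s: "s \<in> {0..1}" "z = cdf_lt s \<or> z = cdf_le s" using assms unfolding Lambda_def by blast
  consider "z = cdf_lt s" "0 < s" | "z = cdf_le 0" | "z = cdf_le s" "s < 1" | "z = cdf_lt 1"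
    using s cdf_lt_0 cdf_le_0 cdf_lt_1 cdf_le_1 by force
  then show thesis
  proof cases
    case 1 then show thesis using that(1) s by auto
  next
    case 2 then show thesis using that(2)[of 0] by auto
  next
    case 3 then show thesis using that(2) s by auto
  next
    case 4 then show thesis using that(1)[of 1] by auto
  qed
qed

lemma f_Lambda: "x \<in> Lambda \<Longrightarrow> f x \<in> Lambda"
  unfolding Lambda_def using f_cdf frac_range by fastforce

lemma fibres_left_of:
  assumes "0 < s" "s \<le> 1" "e > 0"
  obtains \<eta> where "0 < \<eta>" "\<eta> \<le> s"
    "\<And>r. s - \<eta> < r \<Longrightarrow> r < s \<Longrightarrow> cdf_lt s - e < cdf_lt r \<and> cdf_le r < cdf_lt s"
proof -
  obtain \<eta> where \<eta>: "\<eta> > 0" "\<And>r. s - \<eta> < r \<Longrightarrow> r < s \<Longrightarrow> cdf_lt s - e < cdf_lt r"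
    using cdf_lt_left_continuous[OF assms(3)] by blast
  show thesis
  proof (rule that[of "min \<eta> s"])
    show "cdf_lt s - e < cdf_lt r \<and> cdf_le r < cdf_lt s" if "s - min \<eta> s < r" "r < s" for r
      using \<eta>(2)[of r] that assms cdf_le_less_cdf_lt[of r s] by auto
  qed (use \<eta>(1) assms in auto)
qed

lemma fibres_right_of:
  assumes "0 \<le> s" "s < 1" "e > 0"
  obtains \<eta> where "0 < \<eta>" "s + \<eta> \<le> 1"
    "\<And>r. s < r \<Longrightarrow> r < s + \<eta> \<Longrightarrow> cdf_le s < cdf_lt r \<and> cdf_le r < cdf_le s + e"
proof -
  obtain \<eta> where \<eta>: "\<eta> > 0" "\<And>r. s < r \<Longrightarrow> r < s + \<eta> \<Longrightarrow> cdf_le r < cdf_le s + e"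
    using cdf_le_right_continuous[OF assms(3)] by blast
  show thesis
  proof (rule that[of "min \<eta> (1 - s)"])
    show "cdf_le s < cdf_lt r \<and> cdf_le r < cdf_le s + e" if "s < r" "r < s + min \<eta> (1 - s)" for r
      using \<eta>(2)[of r] that assms cdf_le_less_cdf_lt[of s r] by auto
  qed (use \<eta>(1) assms in auto)
qed

lemma orbit_over_interval:
  assumes x: "0 \<le> x" "x \<le> real K" and ab: "0 \<le> a" "a < b" "b \<le> 1"
  obtains t s where "t \<ge> t0" "a < s" "s < b" "over s ((f ^^ t) x)"
proof -
  obtain s where s: "s \<in> {0..1}" "over s x" using over_exists x by blast
  define s1 where "s1 = frac (s + \<theta>)"
  have s1: "over s1 (f x)" "0 \<le> s1" "s1 < 1" unfolding s1_def using f_over s frac_lt_1 by auto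
  obtain t where t: "t \<ge> t0" "frac (s1 + real t * \<theta>) \<in> {a<..<b}"
    using irrational_rotation_hits_interval[OF theta_irrational ab] by blast
  have "over (frac (s1 + real t * \<theta>)) ((f ^^ Suc t) x)"
    using f_iter_over[OF s1(2,3) s1(1)] by (simp add: funpow_Suc_right del: funpow.simps)
  then show thesis using that[of "Suc t"] t by auto
qed

lemma orbit_approaches_cdf_lt:
  assumes x: "0 \<le> x" "x \<le> real K" and s: "0 < s" "s \<le> 1" and e: "e > 0"
  obtains t where "t \<ge> t0" "cdf_lt s - e < (f ^^ t) x" "(f ^^ t) x < cdf_lt s"
proof -
  obtain \<eta> where \<eta>: "0 < \<eta>" "\<eta> \<le> s"
    "\<And>r. s - \<eta> < r \<Longrightarrow> r < s \<Longrightarrow> cdf_lt s - e < cdf_lt r \<and> cdf_le r < cdf_lt s"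
    using fibres_left_of[OF s e] by blast
  obtain t r where "t \<ge> t0" "s - \<eta> < r" "r < s" "over r ((f ^^ t) x)"
    using orbit_over_interval[OF x, of "s - \<eta>" s t0] \<eta> s by auto
  then show thesis using that \<eta>(3) unfolding over_def by force
qed

lemma orbit_approaches_cdf_le:
  assumes x: "0 \<le> x" "x \<le> real K" and s: "0 \<le> s" "s < 1" and e: "e > 0"
  obtains t where "t \<ge> t0" "cdf_le s < (f ^^ t) x" "(f ^^ t) x < cdf_le s + e"
proof -
  obtain \<eta> where \<eta>: "0 < \<eta>" "s + \<eta> \<le> 1"
    "\<And>r. s < r \<Longrightarrow> r < s + \<eta> \<Longrightarrow> cdf_le s < cdf_lt r \<and> cdf_le r < cdf_le s + e"
    using fibres_right_of[OF s e] by blast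
  obtain t r where "t \<ge> t0" "s < r" "r < s + \<eta>" "over r ((f ^^ t) x)"
    using orbit_over_interval[OF x, of s "s + \<eta>" t0] \<eta> s by auto
  then show thesis using that \<eta>(3) unfolding over_def by force
qed

lemma orbit_dense_in_Lambda:
  assumes x: "0 \<le> x" "x \<le> real K" and z: "z \<in> Lambda" and e: "e > 0"
  shows "\<exists>t. \<bar>(f ^^ t) x - z\<bar> < e"
  using z
proof (cases rule: Lambda_cases)
  case (1 s)
  then obtain t where "cdf_lt s - e < (f ^^ t) x" "(f ^^ t) x < cdf_lt s"
    using orbit_approaches_cdf_lt[OF x _ _ e] by metis
  then show ?thesis using 1 by (intro exI[of _ t]) auto
next
  case (2 s)
  then obtain t where "cdf_le s < (f ^^ t) x" "(f ^^ t) x < cdf_le s + e"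
    using orbit_approaches_cdf_le[OF x _ _ e] by metis
  then show ?thesis using 2 by (intro exI[of _ t]) auto
qed

lemma Lambda_approx_avoiding:
  assumes z: "z \<in> Lambda" and e: "e > 0" and F: "finite F"
  obtains r z' where "0 < r" "r < 1" "r \<notin> F" "z' = cdf_lt r \<or> z' = cdf_le r" "z' \<noteq> z"
    "\<bar>z' - z\<bar> < e"
  using z
proof (cases rule: Lambda_cases)
  case (1 s)
  obtain \<eta> where \<eta>: "0 < \<eta>" "\<eta> \<le> s"
    "\<And>r. s - \<eta> < r \<Longrightarrow> r < s \<Longrightarrow> cdf_lt s - e < cdf_lt r \<and> cdf_le r < cdf_lt s"
    using fibres_left_of[OF 1(1,2) e] by blast
  obtain r where r: "s - \<eta> < r" "r < s" "r \<notin> F"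
    using exists_in_interval_avoiding_finite[OF _ F, of "s - \<eta>" s] \<eta>(1) by auto
  show thesis
    using that[of r "cdf_lt r"] \<eta> r 1 cdf_lt_le_cdf_le[of r] by force
next
  case (2 s)
  obtain \<eta> where \<eta>: "0 < \<eta>" "s + \<eta> \<le> 1"
    "\<And>r. s < r \<Longrightarrow> r < s + \<eta> \<Longrightarrow> cdf_le s < cdf_lt r \<and> cdf_le r < cdf_le s + e"
    using fibres_right_of[OF 2(1,2) e] by blast
  obtain r where r: "s < r" "r < s + \<eta>" "r \<notin> F"
    using exists_in_interval_avoiding_finite[OF _ F, of s "s + \<eta>"] \<eta>(1) by auto
  show thesis
    using that[of r "cdf_le r"] \<eta> r 2 cdf_lt_le_cdf_le[of r] by force
qed

lemma fibre_interior_not_in_Lambda: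
  assumes q: "q \<in> {0..1}" and z: "cdf_lt q < z" "z < cdf_le q"
  shows "z \<notin> Lambda"
proof
  assume "z \<in> Lambda"
  then obtain r where r: "r \<in> {0..1}" "z = cdf_lt r \<or> z = cdf_le r" unfolding Lambda_def by blast
  then have "over r z" unfolding over_def using cdf_lt_le_cdf_le by auto
  moreover have "over q z" unfolding over_def using z by simp
  ultimately have "r = q" using over_unique r q by blast
  then show False using r z by auto
qed

text \<open>Between two points of Lambda lies a fibre with non-empty interior: either the two points
  are the ends of one fibre, or they lie over s < t and some orbit point lies between s and t.\<close>

lemma Lambda_gap:
  assumes a: "a \<in> Lambda" and b: "b \<in> Lambda" and ab: "a < b"
  obtains z where "a < z" "z < b" "z \<notin> Lambda"
proof -
  obtain s where s: "s \<in> {0..1}" "a = cdf_lt s \<or> a = cdf_le s" using a unfolding Lambda_def by blast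
  obtain t where t: "t \<in> {0..1}" "b = cdf_lt t \<or> b = cdf_le t" using b unfolding Lambda_def by blast
  have over: "over s a" "over t b" unfolding over_def using s t cdf_lt_le_cdf_le by auto
  have "\<exists>q\<in>{0..1}. a \<le> cdf_lt q \<and> cdf_lt q < cdf_le q \<and> cdf_le q \<le> b"
  proof (cases s t rule: linorder_cases)
    case less
    have "mass {s<..<t} \<noteq> 0" using mass_open_interval_pos[of s t] s t less by simp
    then obtain j n where jn: "j < K" "orb j (Suc n) \<in> {s<..<t}" using mass_eq_0 by blast
    have "cdf_lt (orb j (Suc n)) < cdf_le (orb j (Suc n))" using cdf_lt_less_cdf_le_orb[OF jn(1)] .
    moreover have "a \<le> cdf_lt (orb j (Suc n))" "cdf_le (orb j (Suc n)) \<le> b"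
      using over jn cdf_le_le_cdf_lt unfolding over_def by (auto intro: order_trans)
    ultimately show ?thesis using jn s t by (intro bexI[of _ "orb j (Suc n)"]) auto
  next
    case equal
    then show ?thesis using s t ab over cdf_lt_le_cdf_le[of s] unfolding over_def by auto
  next
    case greater
    then have "cdf_le t < cdf_lt s" using s t by (intro cdf_le_less_cdf_lt) auto
    then show ?thesis using over ab unfolding over_def by auto
  qed
  then obtain q where "q \<in> {0..1}" "a \<le> cdf_lt q" "cdf_lt q < cdf_le q" "cdf_le q \<le> b" by blast
  then show thesis
    using that[of "(cdf_lt q + cdf_le q) / 2"] fibre_interior_not_in_Lambda[of q] by auto
qed

section \<open>Atoms and the attractor\<close>

lemma piece_bounds:
  assumes k: "1 \<le> k" "k \<le> Suc K" and x: "x \<in> piece k"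
  shows "c (k - 1) \<le> x \<and> x \<le> c k \<and> (x < c k \<or> k = Suc K) \<and> 0 \<le> x \<and> x \<le> real K"
  using x k c_0 c_Suc_K unfolding piece_def by (auto split: if_splits)

lemma piece_memI:
  assumes k: "1 \<le> k" "k \<le> Suc K" and x: "c (k - 1) < x" "x < c k"
  shows "x \<in> piece k"
proof -
  have "0 \<le> c (k - 1)" "c k \<le> real K" using c_range k by auto
  then show ?thesis using x k c_0 unfolding piece_def by auto
qed

lemma f_on_piece: "1 \<le> k \<Longrightarrow> k \<le> Suc K \<Longrightarrow> x \<in> piece k \<Longrightarrow> f x = branch k x"
  using piece_bounds f_eq_branch by blast

lemma closure_piece:
  assumes k: "1 \<le> k" "k \<le> Suc K"
  shows "closure (piece k) = {c (k - 1)..c k}"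
proof
  show "closure (piece k) \<subseteq> {c (k - 1)..c k}"
    using piece_bounds[OF k] by (intro closure_minimal) auto
  have "closure {c (k - 1)<..<c k} \<subseteq> closure (piece k)"
    using piece_memI[OF k] by (intro closure_mono) auto
  then show "{c (k - 1)..c k} \<subseteq> closure (piece k)" using c_strict_mono k by simp
qed

lemma c_in_closure_pieces:
  "1 \<le> i \<Longrightarrow> i \<le> K \<Longrightarrow> c i \<in> closure (piece i) \<inter> closure (piece (Suc i))"
  using closure_piece[of i] closure_piece[of "Suc i"] c_mono[of "i - 1" i] c_mono[of i "Suc i"] by auto

abbreviation atom :: "nat list \<Rightarrow> real set" where "atom w \<equiv> atom_of 0 (real K) piece f w"
abbreviation atoms_Union :: "nat \<Rightarrow> real set" where
  "atoms_Union n \<equiv> \<Union>(atoms (Suc K) 0 (real K) piece f n)"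

lemma atom_snoc: "atom (w @ [k]) = Fmap piece f k (atom w)"
  unfolding atom_of_def by simp

lemma atom_Nil: "atom [] = {0..real K}"
  unfolding atom_of_def by simp

lemma mem_atoms_Union_iff:
  "z \<in> atoms_Union n \<longleftrightarrow> (\<exists>w. length w = n \<and> set w \<subseteq> {1..Suc K} \<and> z \<in> atom w)"
  unfolding atoms_def by blast

lemma mem_atoms_Union_Suc_iff:
  "z \<in> atoms_Union (Suc n) \<longleftrightarrow>
     (\<exists>w k. length w = n \<and> set w \<subseteq> {1..Suc K} \<and> k \<in> {1..Suc K} \<and> z \<in> Fmap piece f k (atom w))"
  unfolding mem_atoms_Union_iff
proof
  assume "\<exists>w. length w = Suc n \<and> set w \<subseteq> {1..Suc K} \<and> z \<in> atom w"
  then obtain w where w: "length w = Suc n" "set w \<subseteq> {1..Suc K}" "z \<in> atom w" by blast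
  then obtain v k where "w = v @ [k]" "length v = n" by (metis length_Suc_conv_rev)
  then show "\<exists>w k. length w = n \<and> set w \<subseteq> {1..Suc K} \<and> k \<in> {1..Suc K} \<and> z \<in> Fmap piece f k (atom w)"
    using w atom_snoc by auto
next
  assume "\<exists>w k. length w = n \<and> set w \<subseteq> {1..Suc K} \<and> k \<in> {1..Suc K} \<and> z \<in> Fmap piece f k (atom w)"
  then show "\<exists>w. length w = Suc n \<and> set w \<subseteq> {1..Suc K} \<and> z \<in> atom w"
    using atom_snoc by (metis Un_subset_iff empty_set empty_subsetI insert_subset length_append_singleton
        list.simps(15) set_append)
qed

lemma Fmap_closed: "closed (Fmap piece f k A)"
  unfolding Fmap_def by simp

lemma Fmap_subset: "A \<subseteq> {0..real K} \<Longrightarrow> Fmap piece f k A \<subseteq> {0..real K}"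
  unfolding Fmap_def using f_range by (intro closure_minimal) auto

lemma atom_subset: "atom w \<subseteq> {0..real K}"
proof -
  have "fold (Fmap piece f) w A \<subseteq> {0..real K}" if "A \<subseteq> {0..real K}" for A
    using that by (induction w arbitrary: A) (simp_all add: Fmap_subset)
  then show ?thesis unfolding atom_of_def by simp
qed

lemma atom_closed: "closed (atom w)"
proof -
  have "closed (fold (Fmap piece f) w A)" if "closed A" for A
    using that by (induction w arbitrary: A) (simp_all add: Fmap_closed)
  then show ?thesis unfolding atom_of_def by simp
qed

lemma Lambda_preimage:
  assumes r: "0 < r" "r < 1" "\<And>i. i \<le> Suc K \<Longrightarrow> r \<noteq> frac (cut_pt i + \<theta>)"
    and z: "z = cdf_lt r \<or> z = cdf_le r"
  obtains k x where "k \<in> {1..Suc K}" "x \<in> Lambda" "x \<in> piece k" "f x = z"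
proof -
  define r0 where "r0 = frac (r - \<theta>)"
  have r0: "0 \<le> r0" "r0 < 1" unfolding r0_def by (auto simp: frac_lt_1)
  have "frac (r0 + \<theta>) = r" unfolding r0_def using r(1,2) by simp
  then have r0_ne: "r0 \<noteq> cut_pt i" if "i \<le> Suc K" for i using r(3)[OF that] by auto
  obtain k where k: "k \<in> {1..Suc K}" "cut_pt (k - 1) \<le> r0" "r0 < cut_pt k \<or> k = Suc K"
    using cut_pt_index_exists[OF r0(1)] by blast
  have k1: "1 \<le> k" "k \<le> Suc K" using k by auto
  have rk1: "cut_pt (k - 1) < r0" using k(2) r0_ne[of "k - 1"] k1 by fastforce
  have rk2: "r0 < cut_pt k" using k(3) r0(2) cut_pt_Suc_K by auto
  have rot: "r0 + rot_shift k = r"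
    using rotation_on_cut_interval[OF k1 k(2) rk2] \<open>frac (r0 + \<theta>) = r\<close> by simp
  define x where "x = (if z = cdf_lt r then cdf_lt r0 else cdf_le r0)"
  have "x \<in> Lambda" unfolding x_def Lambda_def using r0 by auto
  have "cdf_le (cut_pt (k - 1)) < cdf_lt r0" "cdf_le r0 < c k"
    using rk1 rk2 r0 cut_pt_range[of "k - 1"] cut_pt_range[of k] k1 unfolding c_def
    by (auto intro!: cdf_le_less_cdf_lt)
  then have "c (k - 1) < x" "x < c k"
    unfolding x_def using c_eq_cdf_le[of "k - 1"] k1 cdf_lt_le_cdf_le[of r0] by auto
  then have "x \<in> piece k" using piece_memI[OF k1] by simp
  moreover have "f x = z"
    using f_on_piece[OF k1 \<open>x \<in> piece k\<close>] branch_cdf_lt[OF k1 rk1] branch_cdf_le[OF k1 k(2) rk2] rk2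
      rot z unfolding x_def by (auto split: if_splits)
  ultimately show thesis using that k(1) \<open>x \<in> Lambda\<close> by blast
qed

lemma Lambda_subset_atoms_Union: "Lambda \<subseteq> atoms_Union n"
proof (induction n)
  case 0
  show ?case
  proof
    fix x assume "x \<in> Lambda"
    then have "x \<in> atom []" using Lambda_range atom_Nil by auto
    then show "x \<in> atoms_Union 0" using mem_atoms_Union_iff[of x 0] by auto
  qed
next
  case (Suc n)
  define W where "W = {w. set w \<subseteq> {1..Suc K} \<and> length w = n}"
  have finW: "finite W" unfolding W_def by (rule finite_lists_length_eq) simp
  define T where "T k w = f ` (atom w \<inter> piece k)" for k w
  define F where "F = (\<lambda>i. frac (cut_pt i + \<theta>)) ` {..Suc K}"
  have image: "\<exists>k\<in>{1..Suc K}. \<exists>w\<in>W. z' \<in> T k w"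
    if r: "0 < r" "r < 1" "r \<notin> F" "z' = cdf_lt r \<or> z' = cdf_le r" for r z'
  proof -
    have "r \<noteq> frac (cut_pt i + \<theta>)" if "i \<le> Suc K" for i using r(3) that unfolding F_def by auto
    then obtain k x where kx: "k \<in> {1..Suc K}" "x \<in> Lambda" "x \<in> piece k" "f x = z'"
      using Lambda_preimage[OF r(1,2) _ r(4)] by blast
    then obtain w where "length w = n" "set w \<subseteq> {1..Suc K}" "x \<in> atom w"
      using Suc.IH mem_atoms_Union_iff by blast
    then have "w \<in> W" "z' \<in> T k w" using kx unfolding W_def T_def by auto
    then show ?thesis using kx(1) by blast
  qed
  show ?case
  proof
    fix z assume z: "z \<in> Lambda"
    have "z \<in> closure (\<Union>k\<in>{1..Suc K}. \<Union>w\<in>W. T k w)"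
      unfolding closure_approachable
    proof (intro allI impI)
      fix e :: real assume "e > 0"
      moreover have "finite F" unfolding F_def by simp
      ultimately obtain r z' where r: "0 < r" "r < 1" "r \<notin> F" "z' = cdf_lt r \<or> z' = cdf_le r"
        "\<bar>z' - z\<bar> < e"
        using Lambda_approx_avoiding[OF z] by blast
      then have "z' \<in> (\<Union>k\<in>{1..Suc K}. \<Union>w\<in>W. T k w)" using image by blast
      moreover have "dist z' z < e" using r(5) by (simp add: dist_real_def)
      ultimately show "\<exists>y\<in>\<Union>k\<in>{1..Suc K}. \<Union>w\<in>W. T k w. dist y z < e" by blast
    qed
    also have "\<dots> = (\<Union>k\<in>{1..Suc K}. \<Union>w\<in>W. closure (T k w))"
      using closure_UN_finite[OF finW, of "T _"] by (simp add: closure_UN_finite)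
    finally obtain k w where "k \<in> {1..Suc K}" "w \<in> W" "z \<in> Fmap piece f k (atom w)"
      unfolding T_def Fmap_def by blast
    then show "z \<in> atoms_Union (Suc n)" unfolding mem_atoms_Union_Suc_iff W_def by blast
  qed
qed

lemma fibre_interior_pullback:
  assumes k: "k \<in> {1..Suc K}" and A: "A \<subseteq> {0..real K}" and q: "q \<in> {0..1}"
    and z: "z \<in> Fmap piece f k A" "cdf_lt q < z" "z < cdf_le q"
  obtains x r where "x \<in> A" "r \<in> {0..1}" "cdf_lt r < x" "x < cdf_le r" "frac (r + \<theta>) = q"
proof -
  define G where "G = {cdf_lt q<..<cdf_le q}"
  have "G \<inter> closure (f ` (A \<inter> piece k)) \<noteq> {}" using z unfolding G_def Fmap_def by auto
  then have "G \<inter> f ` (A \<inter> piece k) \<noteq> {}"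
    using open_Int_closure_eq_empty[of G "f ` (A \<inter> piece k)"] unfolding G_def by simp
  then obtain x where x: "x \<in> A" "f x \<in> G" by blast
  have "0 \<le> x" "x \<le> real K" using x(1) A by auto
  then obtain r where r: "r \<in> {0..1}" "over r x" using over_exists by blast
  have "f x \<notin> Lambda" using fibre_interior_not_in_Lambda[OF q] x(2) unfolding G_def by auto
  then have "x \<notin> Lambda" using f_Lambda by blast
  then have "x \<noteq> cdf_lt r" "x \<noteq> cdf_le r" using r(1) unfolding Lambda_def by auto
  then have "cdf_lt r < x" "x < cdf_le r" using r(2) unfolding over_def by auto
  moreover have "frac (r + \<theta>) = q"
  proof (rule over_unique)
    show "frac (r + \<theta>) \<in> {0..1}" using frac_range by simp
    show "over (frac (r + \<theta>)) (f x)" using f_over r by auto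
    show "over q (f x)" using x(2) unfolding G_def over_def by auto
  qed (rule q)
  ultimately show thesis using that x(1) r(1) by blast
qed

text \<open>The interior of the fibre over orb j (m + 1) is missed by all atoms of generation m + 1:
  pulling back m times leads to the fibre over orb j 1 = R (y j), whose preimage y j is a cut point
  with trivial fibre.\<close>

lemma fibre_interior_outside_atoms:
  "j < K \<Longrightarrow> cdf_lt (orb j (Suc m)) < z \<Longrightarrow> z < cdf_le (orb j (Suc m)) \<Longrightarrow> z \<notin> atoms_Union (Suc m)"
proof (induction m arbitrary: z)
  case 0
  show ?case
  proof
    assume "z \<in> atoms_Union (Suc 0)"
    then obtain w k where k: "k \<in> {1..Suc K}" "z \<in> Fmap piece f k (atom w)"
      unfolding mem_atoms_Union_Suc_iff by blast
    have "orb j (Suc 0) \<in> {0..1}" using orb_range[of j "Suc 0"] by simp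
    then obtain x r where xr: "r \<in> {0..1}" "cdf_lt r < x" "x < cdf_le r" "frac (r + \<theta>) = orb j (Suc 0)"
      using fibre_interior_pullback[OF k(1) atom_subset _ k(2) 0(2,3)] by blast
    have "r - y j \<in> \<int>" using xr(4) unfolding orb_def by (simp add: frac_eq_iff_diff_Ints)
    then have "r = y j \<or> r = y j + 1" using Ints_diff_unit_interval xr(1) y_range[OF 0(1)] by auto
    then have "r = cut_pt j \<or> r = cut_pt (Suc K)"
      using 0(1) y_range[OF 0(1)] xr(1) unfolding cut_pt_def by auto
    then have "cdf_le r = cdf_lt r" using cdf_le_cut_pt 0(1) by auto
    then show False using xr(2,3) by simp
  qed
next
  case (Suc m)
  show ?case
  proof
    assume "z \<in> atoms_Union (Suc (Suc m))"
    then obtain w k where w: "length w = Suc m" "set w \<subseteq> {1..Suc K}" "k \<in> {1..Suc K}"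
      "z \<in> Fmap piece f k (atom w)"
      unfolding mem_atoms_Union_Suc_iff by blast
    have "orb j (Suc (Suc m)) \<in> {0..1}" using orb_range[of j "Suc (Suc m)"] by simp
    then obtain x r where xr: "x \<in> atom w" "r \<in> {0..1}" "cdf_lt r < x" "x < cdf_le r"
      "frac (r + \<theta>) = orb j (Suc (Suc m))"
      using fibre_interior_pullback[OF w(3) atom_subset _ w(4) Suc.prems(2,3)] by blast
    have "frac (r + \<theta>) = frac (orb j (Suc m) + \<theta>)" using xr(5) orb_Suc by simp
    then have "r - orb j (Suc m) \<in> \<int>" by (simp add: frac_eq_iff_diff_Ints)
    then have "r = orb j (Suc m) \<or> r = orb j (Suc m) + 1"
      using Ints_diff_unit_interval xr(2) orb_range by auto
    then have "r = orb j (Suc m)" using orb_ne_0[OF Suc.prems(1)] xr(2) orb_range[of j "Suc m"] by auto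
    then have "x \<notin> atoms_Union (Suc m)" using Suc.IH[OF Suc.prems(1)] xr by simp
    moreover have "x \<in> atoms_Union (Suc m)" unfolding mem_atoms_Union_iff using w xr by blast
    ultimately show False by simp
  qed
qed

lemma attractor_eq_Lambda: "attractor (Suc K) 0 (real K) piece f = Lambda"
proof
  show "Lambda \<subseteq> attractor (Suc K) 0 (real K) piece f"
    unfolding attractor_def using Lambda_subset_atoms_Union by blast
  show "attractor (Suc K) 0 (real K) piece f \<subseteq> Lambda"
  proof
    fix z assume z: "z \<in> attractor (Suc K) 0 (real K) piece f"
    then have zU: "z \<in> atoms_Union (Suc n)" for n unfolding attractor_def by auto
    then obtain w where "z \<in> atom w" unfolding mem_atoms_Union_iff by blast
    then have "z \<in> {0..real K}" using atom_subset by blast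
    then have "0 \<le> z" "z \<le> real K" by auto
    then obtain s where s: "s \<in> {0..1}" "over s z" using over_exists by blast
    show "z \<in> Lambda"
    proof (rule ccontr)
      assume "z \<notin> Lambda"
      then have "z \<noteq> cdf_lt s" "z \<noteq> cdf_le s" using s(1) unfolding Lambda_def by auto
      then have zs: "cdf_lt s < z" "z < cdf_le s" using s(2) unfolding over_def by auto
      then have "mass {s} \<noteq> 0" using cdf_le_minus_cdf_lt[of s] by simp
      then obtain j m where "j < K" "orb j (Suc m) = s" using mass_eq_0[of "{s}"] by blast
      then show False using fibre_interior_outside_atoms zs zU by blast
    qed
  qed
qed

section \<open>The map as a piecewise contracting interval map\<close>

lemma piece_less:
  assumes "i \<in> {1..Suc K}" "j \<in> {1..Suc K}" "i < j" "x \<in> piece i" "z \<in> piece j"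
  shows "x < z"
proof -
  have "x < c i" "c (j - 1) \<le> z" using piece_bounds[of i x] piece_bounds[of j z] assms by auto
  moreover have "c i \<le> c (j - 1)" using c_mono[of i "j - 1"] assms by auto
  ultimately show ?thesis by simp
qed

lemma pieces_disjoint:
  assumes "i \<in> {1..Suc K}" "j \<in> {1..Suc K}" "i \<noteq> j"
  shows "piece i \<inter> piece j = {}"
  using piece_less[OF assms(1,2)] piece_less[OF assms(2,1)] assms(3)
  by (cases i j rule: linorder_cases) force+

lemma Union_closure_pieces: "(\<Union>i\<in>{1..Suc K}. closure (piece i)) = {0..real K}"
proof
  show "(\<Union>i\<in>{1..Suc K}. closure (piece i)) \<subseteq> {0..real K}"
  proof (intro UN_least)
    fix i assume "i \<in> {1..Suc K}"
    then show "closure (piece i) \<subseteq> {0..real K}"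
      using closure_piece[of i] c_range[of "i - 1"] c_range[of i] by auto
  qed
  show "{0..real K} \<subseteq> (\<Union>i\<in>{1..Suc K}. closure (piece i))"
  proof
    fix x :: real assume x: "x \<in> {0..real K}"
    then have "\<exists>k\<in>{1..Suc K}. c (k - 1) \<le> x \<and> (x < c k \<or> k = Suc K)"
      using piece_index_exists by simp
    then obtain k where k: "k \<in> {1..Suc K}" "c (k - 1) \<le> x" "x < c k \<or> k = Suc K" by blast
    then have "x \<in> closure (piece k)" using x c_Suc_K closure_piece[of k] by auto
    then show "x \<in> (\<Union>i\<in>{1..Suc K}. closure (piece i))" using k(1) by blast
  qed
qed

lemma piece_nonempty_open_interval:
  assumes "i \<in> {1..Suc K}"
  shows "piece i \<noteq> {} \<and> is_interval (piece i) \<and> openin (top_of_set {0..real K}) (piece i)"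
proof (intro conjI)
  have "c (i - 1) < c i" using c_strict_mono assms by auto
  then have "(c (i - 1) + c i) / 2 \<in> piece i" using piece_memI[of i] assms by auto
  then show "piece i \<noteq> {}" by auto
  show "is_interval (piece i)" unfolding piece_def is_interval_1 by auto
  show "openin (top_of_set {0..real K}) (piece i)" unfolding piece_def by (intro openin_open_Int) auto
qed

lemma pieces_partition: "pieces_partition (Suc K) 0 (real K) piece"
  unfolding pieces_partition_def
  using K_pos piece_nonempty_open_interval piece_less pieces_disjoint Union_closure_pieces
  by (intro conjI ballI impI) auto

lemma Delta_eq: "Delta (Suc K) piece = c ` {1..K}"
proof
  show "Delta (Suc K) piece \<subseteq> c ` {1..K}"
  proof
    fix x assume "x \<in> Delta (Suc K) piece"
    then obtain i j where ij: "i \<in> {1..Suc K}" "j \<in> {1..Suc K}" "i \<noteq> j"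
      "x \<in> closure (piece i)" "x \<in> closure (piece j)"
      unfolding Delta_def by blast
    have i_bounds: "c (i - 1) \<le> x" "x \<le> c i" and j_bounds: "c (j - 1) \<le> x" "x \<le> c j"
      using ij closure_piece by auto
    show "x \<in> c ` {1..K}"
    proof (cases "i < j")
      case True
      then have "c i \<le> c (j - 1)" using c_mono ij by auto
      then have "x = c i" using i_bounds j_bounds by simp
      then show ?thesis using True ij by auto
    next
      case False
      then have "j < i" using ij by simp
      then have "c j \<le> c (i - 1)" using c_mono ij by auto
      then have "x = c j" using i_bounds j_bounds by simp
      then show ?thesis using \<open>j < i\<close> ij by auto
    qed
  qed
  show "c ` {1..K} \<subseteq> Delta (Suc K) piece"
  proof
    fix x assume "x \<in> c ` {1..K}"
    then obtain i where i: "i \<in> {1..K}" "x = c i" by blast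
    then show "x \<in> Delta (Suc K) piece" unfolding Delta_def using c_in_closure_pieces[of i]
      by (intro CollectI bexI[of _ i] bexI[of _ "Suc i"]) auto
  qed
qed

lemma branch_left_end: "1 \<le> k \<Longrightarrow> k \<le> Suc K \<Longrightarrow> branch k (c (k - 1)) = cdf_le (cut_pt (k - 1) + rot_shift k)"
  using branch_cdf_le[of k "cut_pt (k - 1)"] cut_pt_strict_mono[of "k - 1" k] c_eq_cdf_le[of "k - 1"] by simp

lemma branch_right_end: "1 \<le> k \<Longrightarrow> k \<le> Suc K \<Longrightarrow> branch k (c k) = cdf_lt (cut_pt k + rot_shift k)"
  using branch_cdf_lt[of k "cut_pt k"] cut_pt_strict_mono[of "k - 1" k] unfolding c_def by simp

lemma cut_pt_rotated: "i < K \<Longrightarrow> cut_pt i + \<theta> = orb i (Suc 0)"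
proof -
  assume i: "i < K"
  then have "0 \<le> y i + \<theta>" "y i + \<theta> < 1" using y_range[OF i] y_less[OF i] theta_pos by auto
  then show ?thesis unfolding cut_pt_def orb_def using i by (simp add: frac_eq)
qed

text \<open>At c i, i < K, the left branch ends at the lower end of the fibre over R (cut_pt i) and
  the right branch starts at its upper end; at c K they end at K and start at 0.\<close>

lemma branch_jump: "1 \<le> i \<Longrightarrow> i \<le> K \<Longrightarrow> branch i (c i) \<noteq> branch (Suc i) (c i)"
  using branch_right_end[of i] branch_left_end[of "Suc i"] cdf_lt_less_cdf_le_orb[of i 0]
    cut_pt_rotated[of i] cut_pt_K cdf_lt_1 cdf_le_0 K_pos
  unfolding rot_shift_def by (cases "i = K") auto

lemma f_discontinuous:
  assumes i: "1 \<le> i" "i \<le> K"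
  shows "\<not> continuous (at (c i) within {0..real K}) f"
proof
  assume cont: "continuous (at (c i) within {0..real K}) f"
  define D where "D = \<bar>branch i (c i) - branch (Suc i) (c i)\<bar>"
  have D: "D > 0" unfolding D_def using branch_jump[OF i] by simp
  have fc: "f (c i) = branch (Suc i) (c i)"
    using f_eq_branch[of "Suc i" "c i"] c_strict_mono[of i "Suc i"] i by simp
  obtain d where d: "d > 0"
    "\<And>x'. x' \<in> {0..real K} \<Longrightarrow> dist x' (c i) < d \<Longrightarrow> dist (f x') (f (c i)) < D / 2"
    using cont D unfolding continuous_within_eps_delta by (metis half_gt_zero)
  define m where "m = min (min d (c i - c (i - 1))) D"
  have m: "0 < m" "m \<le> c i - c (i - 1)" "m \<le> d" "m \<le> D"
    unfolding m_def using d D c_strict_mono[of "i - 1" i] i by auto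
  then have x': "c (i - 1) < c i - m / 2" "c i - m / 2 < c i" "m / 2 < d" "m / 2 < D" by linarith+
  moreover have "0 \<le> c (i - 1)" "c i \<le> real K" using c_range i by auto
  ultimately have "c i - m / 2 \<in> {0..real K}" by auto
  then have "dist (f (c i - m / 2)) (f (c i)) < D / 2" using d(2) x' by (simp add: dist_real_def)
  moreover have "f (c i - m / 2) = branch i (c i - m / 2)" using f_eq_branch[of i] x' i by simp
  moreover have "\<bar>branch i (c i - m / 2) - branch i (c i)\<bar> = m / 4" unfolding branch_def using m by (simp add: field_simps)
  ultimately have "D < D / 2 + m / 4" using fc unfolding D_def dist_real_def by (smt (verit))
  then show False using m by linarith
qed

lemma branch_contracting: "\<bar>branch k x - branch k x'\<bar> = 1/2 * \<bar>x - x'\<bar>"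
  unfolding branch_def by (simp add: abs_if)

lemma piecewise_contracting: "piecewise_contracting (Suc K) 0 (real K) piece f"
  unfolding piecewise_contracting_def
proof (intro conjI)
  show "f ` {0..real K} \<subseteq> {0..real K}" using f_range by auto
  show "\<forall>c\<in>Delta (Suc K) piece. \<not> continuous (at c within {0..real K}) f"
    unfolding Delta_eq using f_discontinuous by auto
  show "\<exists>lam. 0 < lam \<and> lam < 1 \<and>
      (\<forall>i\<in>{1..Suc K}. \<forall>x\<in>piece i. \<forall>y\<in>piece i. \<bar>f x - f y\<bar> \<le> lam * \<bar>x - y\<bar>)"
  proof (intro exI[of _ "1/2"] conjI ballI)
    fix i x z assume "i \<in> {1..Suc K}" "x \<in> piece i" "z \<in> piece i"
    then have "f x = branch i x" "f z = branch i z" using f_on_piece by auto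
    then show "\<bar>f x - f z\<bar> \<le> 1/2 * \<bar>x - z\<bar>" using branch_contracting by simp
  qed auto
qed (rule pieces_partition)

lemma piecewise_affine: "piecewise_affine (Suc K) piece f"
  unfolding piecewise_affine_def
proof
  fix i assume "i \<in> {1..Suc K}"
  then have "\<forall>x\<in>piece i. f x = 1/2 * x + (branch i 0)" using f_on_piece unfolding branch_def by auto
  then show "\<exists>\<alpha> \<beta>. \<forall>x\<in>piece i. f x = \<alpha> * x + \<beta>" by blast
qed

lemma branch_image_closure_piece:
  assumes k: "1 \<le> k" "k \<le> Suc K" and x: "x \<in> closure (piece k)"
  shows "cdf_le (cut_pt (k - 1) + rot_shift k) \<le> branch k x \<and> branch k x \<le> cdf_lt (cut_pt k + rot_shift k)"
  using x closure_piece[OF k] branch_left_end[OF k] branch_right_end[OF k]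
    branch_mono[of "c (k - 1)" x k] branch_mono[of x "c k" k] by auto

text \<open>The images of the pieces are separated by the fibres over the points R (cut_pt i), i < K,
  which carry positive mass.\<close>

lemma branch_images_separated:
  assumes i: "i \<in> {1..Suc K}" and j: "j \<in> {1..Suc K}" and ij: "i < j"
    and x: "x \<in> closure (piece i)" and z: "z \<in> closure (piece j)"
  shows "branch i x \<noteq> branch j z"
proof (cases "j = Suc K")
  case True
  have "branch j z \<le> cdf_lt (orb 0 (Suc 0))"
    using branch_image_closure_piece[of j z] j z True cut_pt_Suc_K cut_pt_rotated[of 0] K_pos
      cut_pt_0 unfolding rot_shift_def by auto
  also have "\<dots> < cdf_le (orb 0 (Suc 0))" using cdf_lt_less_cdf_le_orb K_pos by simp
  also have "\<dots> \<le> cdf_le (cut_pt (i - 1) + rot_shift i)"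
    using cut_pt_rotated[of 0] cut_pt_range[of "i - 1"] cut_pt_0 i ij True K_pos
    unfolding rot_shift_def by (intro cdf_le_mono) auto
  also have "\<dots> \<le> branch i x" using branch_image_closure_piece[of i x] i x by auto
  finally show ?thesis by simp
next
  case False
  have "branch i x \<le> cdf_lt (orb i (Suc 0))"
    using branch_image_closure_piece[of i x] i j x ij False cut_pt_rotated[of i] unfolding rot_shift_def by auto
  also have "\<dots> < cdf_le (orb i (Suc 0))" using cdf_lt_less_cdf_le_orb ij j False by simp
  also have "\<dots> \<le> cdf_le (cut_pt (j - 1) + rot_shift j)"
  proof (intro cdf_le_mono)
    have "cut_pt i \<le> cut_pt (j - 1)" using cut_pt_mono[of i "j - 1"] ij j by auto
    then show "orb i (Suc 0) \<le> cut_pt (j - 1) + rot_shift j"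
      using cut_pt_rotated[of i] ij j False unfolding rot_shift_def by auto
  qed
  also have "\<dots> \<le> branch j z" using branch_image_closure_piece[of j z] j z by auto
  finally show ?thesis by simp
qed

lemma separation: "separation (Suc K) piece f"
  unfolding separation_def
proof (intro exI[of _ branch] conjI ballI impI)
  fix i assume i: "i \<in> {1..Suc K}"
  show "continuous_on (closure (piece i)) (branch i)" unfolding branch_def by (intro continuous_intros) auto
  show "inj_on (branch i) (closure (piece i))" by (rule inj_onI) (simp add: branch_def)
  show "branch i x = f x" if "x \<in> piece i" for x using f_on_piece i that by auto
  fix j assume j: "j \<in> {1..Suc K}" and "i \<noteq> j"
  then show "branch i ` closure (piece i) \<inter> branch j ` closure (piece j) = {}"
    using branch_images_separated[OF i j] branch_images_separated[OF j i]
    by (cases i j rule: linorder_cases) fastforce+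
qed

lemma Lambda_closed: "closed Lambda"
proof -
  have "finite (atoms (Suc K) 0 (real K) piece f n)" for n
  proof -
    have "atoms (Suc K) 0 (real K) piece f n \<subseteq> atom ` {w. set w \<subseteq> {1..Suc K} \<and> length w = n}"
      unfolding atoms_def by blast
    then show ?thesis by (rule finite_subset) (simp add: finite_lists_length_eq)
  qed
  then have "closed (atoms_Union n)" for n
    unfolding atoms_def using atom_closed by (intro closed_Union) auto
  then show ?thesis using attractor_eq_Lambda unfolding attractor_def by (metis closed_INT)
qed

lemma Lambda_perfect:
  assumes x: "x \<in> Lambda"
  shows "x islimpt Lambda"
  unfolding islimpt_approachable
proof (intro allI impI)
  fix e :: real assume "e > 0"
  then obtain r z' where r: "0 < r" "r < 1" "z' = cdf_lt r \<or> z' = cdf_le r" "z' \<noteq> x"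
    "\<bar>z' - x\<bar> < e"
    using Lambda_approx_avoiding[OF x, of e "{}"] by blast
  then have "z' \<in> Lambda" unfolding Lambda_def by auto
  then show "\<exists>x'\<in>Lambda. x' \<noteq> x \<and> dist x' x < e" using r(4,5) by (auto simp: dist_real_def)
qed

lemma Lambda_totally_disconnected:
  assumes x: "x \<in> Lambda"
  shows "connected_component_set Lambda x = {x}"
proof -
  define C where "C = connected_component_set Lambda x"
  have xC: "x \<in> C" unfolding C_def using x by (simp add: connected_component_refl)
  have CL: "C \<subseteq> Lambda" unfolding C_def by (rule connected_component_subset)
  have "is_interval C"
    unfolding C_def is_interval_connected_1 by (rule connected_connected_component)
  have "y = x" if y: "y \<in> C" for y
  proof (rule ccontr)
    assume "y \<noteq> x"
    define a where "a = min x y"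
    define b where "b = max x y"
    have ab: "a \<in> C" "b \<in> C" "a < b"
      unfolding a_def b_def using xC y \<open>y \<noteq> x\<close> by (auto simp: min_def max_def)
    then have "a \<in> Lambda" "b \<in> Lambda" using CL by auto
    then obtain z where z: "a < z" "z < b" "z \<notin> Lambda" using Lambda_gap ab(3) by blast
    have "a \<le> z" "z \<le> b" using z by auto
    then have "z \<in> C" using \<open>is_interval C\<close> ab(1,2) unfolding is_interval_1 by blast
    then show False using z CL by blast
  qed
  then show ?thesis using xC unfolding C_def by blast
qed

lemma cantor_set_Lambda: "cantor_set Lambda"
  unfolding cantor_set_def
proof (intro conjI ballI)
  have "cdf_lt 0 \<in> Lambda" unfolding Lambda_def by auto
  then show "Lambda \<noteq> {}" by blast
  have "Lambda \<subseteq> {0..real K}" using Lambda_range by auto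
  then have "bounded Lambda" by (rule bounded_subset[OF bounded_closed_interval])
  then show "compact Lambda" using Lambda_closed by (simp add: compact_eq_bounded_closed)
qed (simp_all add: Lambda_perfect Lambda_totally_disconnected)

lemma minimal_Lambda: "minimal_set f Lambda"
  unfolding minimal_set_def
proof (intro conjI ballI subsetI)
  fix y z assume y: "y \<in> Lambda" and z: "z \<in> Lambda"
  show "z \<in> closure {(f ^^ n) y |n. True}"
    unfolding closure_approachable
  proof (intro allI impI)
    fix e :: real assume "e > 0"
    then obtain t where "\<bar>(f ^^ t) y - z\<bar> < e"
      using orbit_dense_in_Lambda[OF _ _ z] Lambda_range[OF y] by blast
    then show "\<exists>x\<in>{(f ^^ n) y |n. True}. dist x z < e" unfolding dist_real_def by blast
  qed
qed (use f_Lambda in blast)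

section \<open>Left-right visits of the discontinuities\<close>

text \<open>Endpoints of atoms lie over points of cut_orbits: the ends of [0, 1] and the forward
  rotation orbits of the cut points. These never meet a cut point c i again, so c i is always
  interior to any atom containing it.\<close>

definition cut_orbits :: "real set" where
  "cut_orbits = {0, 1} \<union> {frac (cut_pt i + real m * \<theta>) | i m. i \<le> Suc K \<and> 1 \<le> m}"

definition atom_ends :: "real set" where "atom_ends = {x. \<exists>q\<in>cut_orbits. over q x}"

lemma cut_orbits_range: "q \<in> cut_orbits \<Longrightarrow> 0 \<le> q \<and> q \<le> 1"
  unfolding cut_orbits_def using frac_range by auto

lemma rotate_into_cut_orbits:
  assumes "q \<in> cut_orbits \<or> (\<exists>i\<le>Suc K. q = cut_pt i)"
  shows "frac (q + \<theta>) \<in> cut_orbits"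
proof -
  have orbit: "frac (cut_pt i + real m * \<theta>) \<in> cut_orbits" if "i \<le> Suc K" "1 \<le> m" for i m
    unfolding cut_orbits_def using that by blast
  consider "q = 0" | "q = 1" | i m where "i \<le> Suc K" "1 \<le> m" "q = frac (cut_pt i + real m * \<theta>)"
    | i where "i \<le> Suc K" "q = cut_pt i"
    using assms unfolding cut_orbits_def by blast
  then show ?thesis
  proof cases
    case 1 then show ?thesis using orbit[of 0 1] cut_pt_0 by simp
  next
    case 2 then show ?thesis using orbit[of 0 1] cut_pt_0 frac_1_add_theta theta_pos theta_less_half by simp
  next
    case (3 i m)
    then have "frac (q + \<theta>) = frac (cut_pt i + real (Suc m) * \<theta>)" by (simp add: algebra_simps)
    then show ?thesis using orbit[of i "Suc m"] 3 by simp
  next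
    case (4 i) then show ?thesis using orbit[of i 1] by simp
  qed
qed

lemma cut_pt_add_rot_shift:
  assumes k: "1 \<le> k" "k \<le> Suc K" and q: "cut_pt (k - 1) \<le> q" "q \<le> cut_pt k"
  shows "q + rot_shift k = frac (q + \<theta>) \<or> q + rot_shift k = 1"
proof (cases "q < cut_pt k")
  case True then show ?thesis using rotation_on_cut_interval[OF k q(1)] by simp
next
  case False
  then have qk: "q = cut_pt k" using q by simp
  show ?thesis
  proof (cases "k = Suc K")
    case True
    then show ?thesis using qk cut_pt_Suc_K frac_1_add_theta unfolding rot_shift_def by simp
  next
    case False
    then have "q + \<theta> \<le> 1" "0 \<le> q" using qk cut_pt_K cut_pt_mono[of k K] cut_pt_range k by auto
    then show ?thesis using False theta_pos unfolding rot_shift_def by (cases "q + \<theta> < 1") auto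
  qed
qed

lemma branch_mem_atom_ends:
  assumes k: "1 \<le> k" "k \<le> Suc K" and x: "c (k - 1) \<le> x" "x \<le> c k"
    and x_end: "x \<in> atom_ends \<or> x = c (k - 1) \<or> x = c k"
  shows "branch k x \<in> atom_ends"
proof -
  have "\<exists>q. (q \<in> cut_orbits \<or> (\<exists>i\<le>Suc K. q = cut_pt i)) \<and> over q x"
  proof -
    consider "x \<in> atom_ends" | "x = c (k - 1)" | "x = c k" using x_end by blast
    then show ?thesis
    proof cases
      case 1 then show ?thesis unfolding atom_ends_def by blast
    next
      case 2
      then have "over (cut_pt (k - 1)) x" using over_cut_pt_iff[of "k - 1"] k unfolding c_def by simp
      moreover have "k - 1 \<le> Suc K" using k by simp
      ultimately show ?thesis by blast
    next
      case 3
      then have "over (cut_pt k) x" using over_cut_pt_iff[of k] k unfolding c_def by simp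
      then show ?thesis using k by blast
    qed
  qed
  then obtain q where q: "q \<in> cut_orbits \<or> (\<exists>i\<le>Suc K. q = cut_pt i)" "over q x" by blast
  have q01: "0 \<le> q" "q \<le> 1" using q(1) cut_orbits_range cut_pt_range by auto
  have q1: "cut_pt (k - 1) \<le> q" and q2: "q \<le> cut_pt k"
    using over_between_cuts[OF k q01 q(2) x] by auto
  have "over (q + rot_shift k) (branch k x)" using branch_over[OF k q1 q2 q(2)] .
  moreover have "1 \<in> cut_orbits" unfolding cut_orbits_def by simp
  then have "q + rot_shift k \<in> cut_orbits"
    using cut_pt_add_rot_shift[OF k q1 q2] rotate_into_cut_orbits[OF q(1)] by auto
  ultimately show ?thesis unfolding atom_ends_def by blast
qed

lemma Fmap_interval_subset:
  assumes k: "1 \<le> k" "k \<le> Suc K"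
  shows "Fmap piece f k {l..r} \<subseteq> {branch k (max l (c (k - 1)))..branch k (min r (c k))}"
  unfolding Fmap_def
proof (intro closure_minimal)
  show "f ` ({l..r} \<inter> piece k) \<subseteq> {branch k (max l (c (k - 1)))..branch k (min r (c k))}"
    using piece_bounds[OF k] f_on_piece[OF k] branch_mono by fastforce
qed simp

lemma Fmap_interval_eq:
  assumes k: "1 \<le> k" "k \<le> Suc K" and lr: "max l (c (k - 1)) < min r (c k)"
  shows "Fmap piece f k {l..r} = {branch k (max l (c (k - 1)))..branch k (min r (c k))}"
proof
  define l' r' where "l' = max l (c (k - 1))" and "r' = min r (c k)"
  have "{branch k l'<..<branch k r'} \<subseteq> f ` ({l..r} \<inter> piece k)"
  proof
    fix v assume v: "v \<in> {branch k l'<..<branch k r'}"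
    define x where "x = 2 * (v - branch k 0)"
    have "branch k x = v" unfolding x_def branch_def by (simp add: field_simps)
    moreover have "l' < x" "x < r'" using v unfolding x_def branch_def by auto
    then have "x \<in> {l..r} \<inter> piece k" using piece_memI[OF k] unfolding l'_def r'_def by auto
    ultimately show "v \<in> f ` ({l..r} \<inter> piece k)" using f_on_piece[OF k] by (metis IntD2 image_eqI)
  qed
  then have "closure {branch k l'<..<branch k r'} \<subseteq> Fmap piece f k {l..r}"
    unfolding Fmap_def by (rule closure_mono)
  moreover have "branch k l' < branch k r'" using lr unfolding l'_def r'_def branch_def by simp
  ultimately show "{branch k l'..branch k r'} \<subseteq> Fmap piece f k {l..r}" by simp
qed (use Fmap_interval_subset[OF k] in simp)

lemma atom_shape:
  "set w \<subseteq> {1..Suc K} \<Longrightarrow> atom w = {} \<or> (\<exists>l r. l \<le> r \<and> atom w = {l..r} \<and> l \<in> atom_ends \<and> r \<in> atom_ends)"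
proof (induction w rule: rev_induct)
  case Nil
  have "over 0 0" "over 1 (real K)" unfolding over_def using cdf_lt_0 cdf_le_0 cdf_lt_1 cdf_le_1 by simp_all
  then have "0 \<in> atom_ends" "real K \<in> atom_ends" unfolding atom_ends_def cut_orbits_def by blast+
  then show ?case using atom_Nil by auto
next
  case (snoc k w)
  have k: "1 \<le> k" "k \<le> Suc K" using snoc.prems by auto
  show ?case
  proof (cases "atom w = {}")
    case True then show ?thesis using atom_snoc unfolding Fmap_def by simp
  next
    case False
    then obtain l r where lr: "l \<le> r" "atom w = {l..r}" "l \<in> atom_ends" "r \<in> atom_ends"
      using snoc by auto
    define l' r' where "l' = max l (c (k - 1))" and "r' = min r (c k)"
    have ends: "branch k l' \<in> atom_ends" "branch k r' \<in> atom_ends" if "l' \<le> r'"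
      using that lr c_mono[of "k - 1" k] k unfolding l'_def r'_def
      by (auto intro!: branch_mem_atom_ends[OF k] simp: max_def min_def split: if_splits)
    have sub: "atom (w @ [k]) \<subseteq> {branch k l'..branch k r'}"
      using Fmap_interval_subset[OF k] atom_snoc lr(2) unfolding l'_def r'_def by simp
    consider "l' < r'" | "l' = r'" | "r' < l'" by linarith
    then show ?thesis
    proof cases
      case 1
      then have "atom (w @ [k]) = {branch k l'..branch k r'}"
        using Fmap_interval_eq[OF k] atom_snoc lr(2) unfolding l'_def r'_def by simp
      then show ?thesis using ends 1 branch_mono[of l' r' k] by auto
    next
      case 2
      then have "atom (w @ [k]) = {} \<or> atom (w @ [k]) = {branch k l'..branch k l'}" using sub by auto
      then show ?thesis using ends 2 by blast
    next
      case 3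
      then have "branch k r' < branch k l'" unfolding branch_def by simp
      then show ?thesis using sub by auto
    qed
  qed
qed

lemma cut_pt_decomp:
  assumes "i \<le> Suc K"
  obtains j a b where "j < K" "cut_pt i = y j + of_int a * \<theta> + of_int b"
    "a = (if i = K then -1 else 0)" "i < K \<Longrightarrow> j = i" "K \<le> i \<Longrightarrow> j = 0"
proof (cases "i < K")
  case True then show thesis using that[of i 0 0] unfolding cut_pt_def by simp
next
  case False
  then have "cut_pt i = y 0 + of_int (if i = K then -1 else 0) * \<theta> + of_int 1"
    using assms y_0 unfolding cut_pt_def by auto
  then show thesis using that[of 0] K_pos False by auto
qed

text \<open>A cut point cut_pt i, 1 \<le> i \<le> K, is not in the forward orbit of any cut point: writing the
  cut points as y j + a \<theta> + b with a \<in> {-1, 0}, this would contradict the rational independence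
  of the y j from \<theta>.\<close>

lemma cut_pt_notin_cut_orbits:
  assumes i: "1 \<le> i" "i \<le> K"
  shows "cut_pt i \<notin> cut_orbits"
proof
  assume "cut_pt i \<in> cut_orbits"
  moreover have "cut_pt 0 < cut_pt i" "cut_pt i < cut_pt (Suc K)" using cut_pt_strict_mono i by auto
  ultimately obtain i' m where im: "i' \<le> Suc K" "1 \<le> m" "cut_pt i = frac (cut_pt i' + real m * \<theta>)"
    using cut_pt_0 cut_pt_Suc_K unfolding cut_orbits_def by auto
  obtain j a b where jab: "j < K" "cut_pt i = y j + of_int a * \<theta> + of_int b"
    "a = (if i = K then -1 else 0)" "i < K \<Longrightarrow> j = i"
    using cut_pt_decomp[of i] i by (metis le_SucI)
  obtain j' a' b' where jab': "j' < K" "cut_pt i' = y j' + of_int a' * \<theta> + of_int b'"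
    "a' = (if i' = K then -1 else 0)" "K \<le> i' \<Longrightarrow> j' = 0"
    using cut_pt_decomp[OF im(1)] by metis
  have "cut_pt i' + real m * \<theta> - cut_pt i \<in> \<int>" using im(3) by (metis frac_unique_iff)
  moreover have "cut_pt i' + real m * \<theta> - cut_pt i
      = (y j' - y j - of_int (a - a' - int m) * \<theta>) + of_int (b' - b)"
    using jab(2) jab'(2) by (simp add: algebra_simps)
  ultimately have "y j' - y j - of_int (a - a' - int m) * \<theta> \<in> \<int>"
    by (metis Ints_diff Ints_of_int add_diff_cancel_right')
  from y_independent_Ints[OF jab'(1) jab(1) this] have "j' = j" "a = a' + int m" by auto
  then have "a = 0" "a' = -1" using jab(3) jab'(3) im(2) by (auto split: if_splits)
  then show False using jab jab' \<open>j' = j\<close> i by (auto split: if_splits)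
qed

lemma c_notin_atom_ends:
  assumes i: "1 \<le> i" "i \<le> K"
  shows "c i \<notin> atom_ends"
proof
  assume "c i \<in> atom_ends"
  then obtain q where q: "q \<in> cut_orbits" "over q (c i)" unfolding atom_ends_def by blast
  have "over (cut_pt i) (c i)" using over_cut_pt_iff i unfolding c_def by simp
  then have "q = cut_pt i" using over_unique q cut_orbits_range[OF q(1)] cut_pt_range[of i] i by auto
  then show False using cut_pt_notin_cut_orbits[OF i] q(1) by simp
qed

lemma cut_pt_interior: "1 \<le> i \<Longrightarrow> i \<le> K \<Longrightarrow> 0 < cut_pt i \<and> cut_pt i < 1"
  using cut_pt_strict_mono[of 0 i] cut_pt_strict_mono[of i "Suc K"] cut_pt_0 cut_pt_Suc_K by auto

lemma orbit_enters_piece_left_of_c: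
  assumes i: "1 \<le> i" "i \<le> K" and x: "0 \<le> x" "x \<le> real K" and l: "l < c i"
  obtains t where "t \<ge> n" "(f ^^ t) x \<in> {l<..<c i} \<inter> piece i"
proof -
  define e where "e = c i - max l (c (i - 1))"
  have "e > 0" unfolding e_def using l c_strict_mono[of "i - 1" i] i by simp
  then obtain t where t: "t \<ge> n" "c i - e < (f ^^ t) x" "(f ^^ t) x < c i"
    using orbit_approaches_cdf_lt[OF x _ _ \<open>e > 0\<close>, of "cut_pt i" n] cut_pt_interior[OF i]
    unfolding c_def by auto
  then have "(f ^^ t) x \<in> piece i" using piece_memI[of i] i unfolding e_def by auto
  then show thesis using that t unfolding e_def by auto
qed

lemma orbit_enters_piece_right_of_c:
  assumes i: "1 \<le> i" "i \<le> K" and x: "0 \<le> x" "x \<le> real K" and r: "c i < r"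
  obtains t where "t \<ge> n" "(f ^^ t) x \<in> {c i<..<r} \<inter> piece (Suc i)"
proof -
  define e where "e = min r (c (Suc i)) - c i"
  have "e > 0" unfolding e_def using r c_strict_mono[of i "Suc i"] i by simp
  then obtain t where t: "t \<ge> n" "c i < (f ^^ t) x" "(f ^^ t) x < c i + e"
    using orbit_approaches_cdf_le[OF x _ _ \<open>e > 0\<close>, of "cut_pt i" n] cut_pt_interior[OF i]
      c_eq_cdf_le[of i] i by auto
  then have "(f ^^ t) x \<in> piece (Suc i)" using piece_memI[of "Suc i"] i unfolding e_def by auto
  then show thesis using that t unfolding e_def by auto
qed

text \<open>An atom of generation n containing c i is an interval with ends in atom_ends, hence
  contains c i in its interior.\<close>

lemma c_left_right_visited:
  assumes i: "1 \<le> i" "i \<le> K" and x: "0 \<le> x" "x \<le> real K"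
  shows "c i \<in> Delta_lr_n (Suc K) 0 (real K) piece f n x"
proof -
  have "c i \<in> Lambda" unfolding Lambda_def c_def using cut_pt_interior[OF i] by auto
  then have "c i \<in> atoms_Union n" using Lambda_subset_atoms_Union by blast
  then obtain w where w: "length w = n" "set w \<subseteq> {1..Suc K}" "c i \<in> atom w"
    unfolding mem_atoms_Union_iff by blast
  then have "atom w \<noteq> {}" by auto
  then obtain l r where lr: "atom w = {l..r}" "l \<in> atom_ends" "r \<in> atom_ends"
    using atom_shape[OF w(2)] by blast
  have "l \<noteq> c i" "r \<noteq> c i" using lr c_notin_atom_ends[OF i] by auto
  then have "l < c i" "c i < r" using w(3) lr(1) by auto
  obtain t where t: "t \<ge> n" "(f ^^ t) x \<in> {l<..<c i} \<inter> piece i"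
    using orbit_enters_piece_left_of_c[OF i x \<open>l < c i\<close>] by blast
  obtain t' where t': "t' \<ge> n" "(f ^^ t') x \<in> {c i<..<r} \<inter> piece (Suc i)"
    using orbit_enters_piece_right_of_c[OF i x \<open>c i < r\<close>] by blast
  have "{l<..<c i} \<subseteq> atom w" "{c i<..<r} \<subseteq> atom w"
    unfolding lr(1) using \<open>l < c i\<close> \<open>c i < r\<close> by auto
  moreover have "(t - n) + n = t" "(t' - n) + n = t'" using t(1) t'(1) by simp_all
  ultimately have left: "(f ^^ ((t - n) + n)) x \<in> atom w \<inter> piece i"
    and right: "(f ^^ ((t' - n) + n)) x \<in> atom w \<inter> piece (Suc i)"
    using t(2) t'(2) by (simp_all add: subset_iff)
  have "atom w \<in> atoms (Suc K) 0 (real K) piece f n" unfolding atoms_def using w \<open>atom w \<noteq> {}\<close> by blast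
  then have "atom w \<in> atoms_visited (Suc K) 0 (real K) piece f n x"
    unfolding atoms_visited_def using left by blast
  moreover have "i \<in> {1..<Suc K}" using i by simp
  ultimately show ?thesis
    unfolding Delta_lr_n_def using w(3) c_in_closure_pieces[OF i]
    by (intro CollectI bexI[of _ i] conjI bexI[of _ "atom w"] exI[of _ "t - n"] exI[of _ "t' - n"] left right)
qed

lemma Delta_lr_eq_Delta:
  assumes x: "x \<in> {0..real K}"
  shows "Delta_lr (Suc K) 0 (real K) piece f x = Delta (Suc K) piece"
proof
  show "Delta_lr (Suc K) 0 (real K) piece f x \<subseteq> Delta (Suc K) piece"
  proof
    fix z assume "z \<in> Delta_lr (Suc K) 0 (real K) piece f x"
    then have "z \<in> Delta_lr_n (Suc K) 0 (real K) piece f 1 x" unfolding Delta_lr_def by auto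
    then obtain i where "i \<in> {1..<Suc K}" "z \<in> closure (piece i) \<inter> closure (piece (Suc i))"
      unfolding Delta_lr_n_def by blast
    then show "z \<in> Delta (Suc K) piece" unfolding Delta_def
      by (intro CollectI bexI[of _ i] bexI[of _ "Suc i"]) auto
  qed
  show "Delta (Suc K) piece \<subseteq> Delta_lr (Suc K) 0 (real K) piece f x"
    unfolding Delta_eq Delta_lr_def using c_left_right_visited x by auto
qed

lemma denjoy_example:
  "\<exists>(a::real) (b::real) (P :: nat \<Rightarrow> real set) (f :: real \<Rightarrow> real).
     piecewise_contracting (Suc K) a b P f \<and> piecewise_affine (Suc K) P f \<and> separation (Suc K) P f \<and>
     cantor_set (attractor (Suc K) a b P f) \<and> minimal_set f (attractor (Suc K) a b P f) \<and>
     (\<forall>x\<in>{a..b}. Delta_lr (Suc K) a b P f x = Delta (Suc K) P)"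
proof (intro exI conjI)
  show "piecewise_contracting (Suc K) 0 (real K) piece f" by (rule piecewise_contracting)
  show "cantor_set (attractor (Suc K) 0 (real K) piece f)"
    unfolding attractor_eq_Lambda by (rule cantor_set_Lambda)
  show "minimal_set f (attractor (Suc K) 0 (real K) piece f)"
    unfolding attractor_eq_Lambda by (rule minimal_Lambda)
  show "\<forall>x\<in>{0..real K}. Delta_lr (Suc K) 0 (real K) piece f x = Delta (Suc K) piece"
    using Delta_lr_eq_Delta by blast
qed (fact piecewise_affine separation)+

end

section \<open>Existence of the parameters\<close>

text \<open>An irrational \<theta> and equally spaced y j = j s, with s avoiding the countably many numbers
  (m \<theta> + n) / d.\<close>

lemma denjoy_data_exists:
  assumes "1 \<le> K"
  obtains \<theta> y where "denjoy_data K \<theta> y"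
proof -
  obtain \<theta> :: real where th: "0 < \<theta>" "\<theta> < 1/2" "\<theta> \<notin> \<rat>"
    using exists_in_interval_avoiding_countable[of 0 "1/2" \<rat>] countable_rat by auto
  define B where "B = (\<lambda>(m, n, d). (of_int m * \<theta> + of_int n) / of_int d) ` (UNIV :: (int \<times> int \<times> int) set)"
  obtain s :: real where s: "0 < s" "s < 1 / (2 * real (Suc K))" "s \<notin> B"
    using exists_in_interval_avoiding_countable[of 0 "1 / (2 * real (Suc K))" B] unfolding B_def by auto
  have y_less: "real j * s < 1 - \<theta>" if "j < K" for j
  proof -
    have "real j * s \<le> real (Suc K) * s" using that s by (intro mult_right_mono) auto
    also have "\<dots> < 1/2" using s(2) by (simp add: field_simps)
    finally show ?thesis using th by simp
  qed
  have independent: "j = k \<and> m = 0" if "real j * s - real k * s = of_int m * \<theta> + of_int n" for j k m n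
  proof (cases "j = k")
    case True
    then have mn: "of_int m * \<theta> + of_int n = 0" using that by simp
    have "m = 0"
    proof (rule ccontr)
      assume "m \<noteq> 0"
      then have "\<theta> = - of_int n / of_int m" using mn by (simp add: field_simps)
      then show False using th(3) by simp
    qed
    then show ?thesis using True by simp
  next
    case False
    then have "s = (of_int m * \<theta> + of_int n) / of_int (int j - int k)"
      using that by (simp add: field_simps left_diff_distrib[symmetric])
    then have "s \<in> B" unfolding B_def by (intro image_eqI[of _ _ "(m, n, int j - int k)"]) auto
    then show ?thesis using s(3) by simp
  qed
  have "denjoy_data K \<theta> (\<lambda>j. real j * s)"
    using assms th s y_less independent by unfold_locales auto
  then show thesis by (rule that)
qed

theorem theorem3:
  fixes N :: nat
  assumes "N \<ge> 2"
  shows "\<exists>(a::real) (b::real) (P :: nat \<Rightarrow> real set) (f :: real \<Rightarrow> real).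
           piecewise_contracting N a b P f \<and> piecewise_affine N P f \<and> separation N P f \<and>
           cantor_set (attractor N a b P f) \<and> minimal_set f (attractor N a b P f) \<and>
           (\<forall>x\<in>{a..b}. Delta_lr N a b P f x = Delta N P)"
proof -
  have "1 \<le> N - 1" using assms by simp
  then obtain \<theta> y where "denjoy_data (N - 1) \<theta> y" by (rule denjoy_data_exists)
  then show ?thesis
    using denjoy_data.denjoy_example[of "N - 1" \<theta> y] assms by (simp add: Suc_diff_1)
qed

end
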